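(* Let $\vec\omega_s=((e_1,m_1),\dots,(e_s,m_s))$ be the sequential random link sequence and let $(e_{s+1},m_{s+1})$ be the next link. For every $s\ge 0$, every $k\in\mathbb{N}$ and every realization of $\vec\omega_s$, the conditional probability (given $\vec\omega_s$) that in passing from $\vec\omega_s$ to $\vec\omega_{s+1}$ some cycle of $\vec\omega_s$ is split into two cycles at least one of which contains at most $k$ vertices is at most $2k/(n-1)$.
   Context: Complete graph $K_n$ with vertex set $V_n=\{1,\dots,n\}$, $n>2$, and edge set $E_n$ of unordered pairs of distinct vertices. Fix $\nu\in[0,1)$. A link is a pair $(e,m)$ with $e\in E_n$ and mark $m\in\{\text{cross},\text{bar}\}$. The sequential random sequence: $(e_1,m_1),(e_2,m_2),\dots$ are i.i.d., with $e_i$ uniform on $E_n$ and $m_i$ independent of $e_i$, equal to cross with probability $\nu$; $\vec\omega_s$ denotes the first $s$ of them. Cycles of a finite link sequence $((e_1,m_1),\dots,(e_s,m_s))$ are the cycles of the configuration $\{(e_i,\tfrac{i}{s+1},m_i)\}\subset E_n\times S^1\times\{\text{cross},\text{bar}\}$, where $S^1=[0,1)$ periodic, defined as follows. Loops: from $(v,\varphi)\in V_n\times S^1$ move along $\{v\}\times S^1$ in the positive direction; on reaching $(v,\varphi')$ where there is a link on $\{v,w\}$ at height $\varphi'$, jump to $(w,\varphi')$ and continue in the same direction if the link is a cross, reversed direction if a bar, until returning to the start. A cycle lists the successive visits $(v_1,0),\dots,(v_\ell,0)$ of a loop to $V_n\times\{0\}$ as $(v_1^{d_1},\dots,v_\ell^{d_\ell})$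 with $d_i\in\{\uparrow,\downarrow\}$ the direction of passage (positive/negative), up to rotation and overall reversal. The cycles partition $V_n$. When a link is appended, if its endpoints lie in different cycles these cycles merge into one; if they lie in the same cycle, that cycle either splits into two cycles or remains a single (restructured) cycle, depending on the mark and on the directions of the two endpoints in the cycle. *)

theory Defs
  imports "HOL-Probability.Probability"
begin

definition V :: "nat \<Rightarrow> nat set" where
  "V n = {1..n}"

definition E :: "nat \<Rightarrow> nat set set" where
  "E n = {{u, v} | u v. u \<in> V n \<and> v \<in> V n \<and> u \<noteq> v}"

datatype mark = Cross | Bar

type_synonym link = "nat set \<times> mark"

definition link_pmf :: "nat \<Rightarrow> real \<Rightarrow> link pmf" where
  "link_pmf n nu = pair_pmf (pmf_of_set (E n))
      (map_pmf (\<lambda>b. if b then Cross else Bar) (bernoulli_pmf nu))"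

text \<open>For a link sequence ws of length s, link i (1 \<le> i \<le> s,
  namely ws ! (i-1)) sits at height i/(s+1).  A state (v, j, d) means: on vertex v, inside the
  open height interval (j/(s+1), (j+1)/(s+1)) (0 \<le> j \<le> s), moving in direction d.
  The map loop_step moves to the next such interval along the loop.\<close>

datatype dir = Up | Down

definition other :: "nat set \<Rightarrow> nat \<Rightarrow> nat" where
  "other e v = (THE w. w \<in> e \<and> w \<noteq> v)"

fun loop_step :: "link list \<Rightarrow> nat \<times> nat \<times> dir \<Rightarrow> nat \<times> nat \<times> dir" where
  "loop_step ws (v, j, Up) =
     (if j = length ws then (v, 0, Up)
      else (case ws ! j of (e, m) \<Rightarrow>
              if v \<in> e then (case m of Cross \<Rightarrow> (other e v, Suc j, Up)
                                    | Bar \<Rightarrow> (other e v, j, Down))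
              else (v, Suc j, Up)))"
| "loop_step ws (v, j, Down) =
     (if j = 0 then (v, length ws, Down)
      else (case ws ! (j - 1) of (e, m) \<Rightarrow>
              if v \<in> e then (case m of Cross \<Rightarrow> (other e v, j - 1, Down)
                                    | Bar \<Rightarrow> (other e v, j, Up))
              else (v, j - 1, Down)))"

text \<open>The loop through (u,0), traversed in the positive direction starting just below height 0,
  visits (v,0) iff it reaches the state just before passing (v,0) upwards, (v, s, Up),
  or the state just before passing (v,0) downwards, (v, 0, Down).\<close>

definition same_cycle :: "link list \<Rightarrow> nat \<Rightarrow> nat \<Rightarrow> bool" where
  "same_cycle ws u v \<longleftrightarrow>
     (\<exists>t. (loop_step ws ^^ t) (u, length ws, Up) \<in> {(v, length ws, Up), (v, 0, Down)})"

definition cycles :: "nat \<Rightarrow> link list \<Rightarrow> nat set set" where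
  "cycles n ws = {{v \<in> V n. same_cycle ws u v} | u. u \<in> V n}"

definition splits_small :: "nat \<Rightarrow> link list \<Rightarrow> link \<Rightarrow> nat \<Rightarrow> bool" where
  "splits_small n ws l k \<longleftrightarrow>
     (\<exists>C \<in> cycles n ws. \<exists>C1 C2.
        C1 \<union> C2 = C \<and> C1 \<inter> C2 = {} \<and> C1 \<noteq> {} \<and> C2 \<noteq> {} \<and>
        cycles n (ws @ [l]) = (cycles n ws - {C}) \<union> {C1, C2} \<and>
        (card C1 \<le> k \<or> card C2 \<le> k))"

end

theory Submission
  imports Defs
begin

text \<open>
  Loops are the orbits of the injective map \<open>loop_step\<close> on the finite set of states
  (vertex, height interval, direction). Reversing the direction maps loops to loops, and no loop
  contains the reversal of one of its states, so every cycle is swept out by a loop and its reversal.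
  Appending the link \<open>{a, b}\<close> amounts to first appending a dummy link, which changes no cycle, and
  then precomposing the loop map with two transpositions of the four states entering the new link.
  A transposition merges the orbits of its two points if they differ and cuts their common orbit into
  two arcs otherwise. Following the orientations, a cycle can only split into two cycles when \<open>b\<close> lies
  on the loop leaving \<open>a\<close> upwards through height 0 (in the right direction for the mark), and the two
  parts then have sizes \<open>p\<close> and \<open>l - p\<close> (cross) or \<open>p + 1\<close> and \<open>l - p - 1\<close> (bar), where \<open>l\<close> is the size
  of the cycle and \<open>p\<close> the number of vertices the loop visits before reaching \<open>b\<close>. Since \<open>p\<close> determines
  \<open>b\<close>, at most \<open>2k\<close> partners \<open>b\<close> of \<open>a\<close> produce a part with at most \<open>k\<close> vertices; counting each edge from
  both endpoints, at most \<open>kn\<close> of the \<open>n(n - 1)/2\<close> edges are bad, for either mark.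
\<close>

hide_const (open) Finite_Cartesian_Product.transpose
hide_fact (open) Finite_Cartesian_Product.transpose_def

definition orbit :: "('a \<Rightarrow> 'a) \<Rightarrow> 'a \<Rightarrow> 'a set" where
  "orbit f x = range (\<lambda>i. (f ^^ i) x)"

lemma orbit_cong:
  assumes "\<And>z. z \<in> X \<Longrightarrow> f z = g z" "\<And>z. z \<in> X \<Longrightarrow> f z \<in> X" "x \<in> X"
  shows "orbit f x = orbit g x"
proof -
  have "(f ^^ i) x = (g ^^ i) x \<and> (f ^^ i) x \<in> X" for i
    by (induction i) (use assms in auto)
  then show ?thesis unfolding orbit_def by auto
qed

lemma orbit_self: "x \<in> orbit f x"
  unfolding orbit_def by (auto intro: range_eqI[where x=0])

lemma orbit_step: "y \<in> orbit f x \<Longrightarrow> f y \<in> orbit f x"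
proof -
  assume "y \<in> orbit f x"
  then obtain i where "y = (f^^i) x" unfolding orbit_def by auto
  then have "f y = (f^^(Suc i)) x" by simp
  then show ?thesis unfolding orbit_def by blast
qed

lemma orbit_funpow: "(f ^^ i) x \<in> orbit f x"
  unfolding orbit_def by auto

lemma orbit_trans: "y \<in> orbit f x \<Longrightarrow> z \<in> orbit f y \<Longrightarrow> z \<in> orbit f x"
proof -
  assume "y \<in> orbit f x" "z \<in> orbit f y"
  then obtain i j where "y = (f^^i) x" "z = (f^^j) y" unfolding orbit_def by auto
  then have "z = (f^^(j+i)) x" by (simp add: funpow_add)
  then show ?thesis unfolding orbit_def by auto
qed

lemma funpow_split: "i \<le> j \<Longrightarrow> (f^^j) x = (f^^i) ((f^^(j-i)) x)"
proof -
  assume "i \<le> j"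
  have "(f^^i) ((f^^(j-i)) x) = (f^^(i + (j-i))) x" by (simp add: funpow_add)
  then show ?thesis using \<open>i \<le> j\<close> by simp
qed

lemma funpow_mult_period: "(f ^^ p) x = x \<Longrightarrow> (f ^^ (q * p)) x = x"
  by (induction q) (auto simp: funpow_add)

lemma funpow_mod_period: "(f ^^ p) x = x \<Longrightarrow> (f ^^ i) x = (f ^^ (i mod p)) x"
proof -
  assume a: "(f ^^ p) x = x"
  have "(f ^^ (i mod p)) ((f ^^ (i div p * p)) x) = (f ^^ (i mod p + i div p * p)) x"
    by (simp only: funpow_add comp_apply)
  also have "i mod p + i div p * p = i" by (rule mod_div_mult_eq)
  finally have "(f ^^ i) x = (f ^^ (i mod p)) ((f ^^ (i div p * p)) x)" by simp
  then show ?thesis using funpow_mult_period[OF a] by simp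
qed

lemma orbit_eq_period_image: assumes "(f ^^ p) x = x" "p > 0"
  shows "orbit f x = (\<lambda>i. (f ^^ i) x) ` {1..p}"
proof
  show "orbit f x \<subseteq> (\<lambda>i. (f ^^ i) x) ` {1..p}"
  proof
    fix y assume "y \<in> orbit f x"
    then obtain i where y: "y = (f ^^ i) x" unfolding orbit_def by auto
    show "y \<in> (\<lambda>i. (f ^^ i) x) ` {1..p}"
    proof (cases "i mod p = 0")
      case True
      then show ?thesis using y funpow_mod_period[OF assms(1), of i] assms by (auto intro!: image_eqI[of _ _ p])
    next
      case False
      then show ?thesis using y funpow_mod_period[OF assms(1), of i] assms
        by (auto intro!: image_eqI[of _ _ "i mod p"] simp: Suc_leI)
    qed
  qed
qed (auto simp: orbit_def)

lemma orbit_transpose_outside: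
  assumes "x \<notin> orbit f w" "y \<notin> orbit f w"
  shows "orbit (f \<circ> transpose x y) w = orbit f w"
proof -
  have "((f \<circ> transpose x y) ^^ i) w = (f ^^ i) w" for i
  proof (induction i)
    case (Suc i)
    have "(f^^i) w \<in> orbit f w" by (rule orbit_funpow)
    then have "transpose x y ((f^^i) w) = (f^^i) w" using assms by (auto simp: transpose_def)
    then show ?case using Suc by simp
  qed simp
  then show ?thesis unfolding orbit_def by simp
qed

lemma funpow_transpose_run:
  assumes "(f \<circ> transpose x y) z = f w" "\<forall>i. 0 < i \<and> i < k \<longrightarrow> (f^^i) w \<noteq> x \<and> (f^^i) w \<noteq> y"
    "0 < j" "j \<le> k"
  shows "((f \<circ> transpose x y)^^j) z = (f^^j) w"
  using assms(3,4)
proof (induction j)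
  case 0 then show ?case by simp
next
  case (Suc j)
  show ?case
  proof (cases "j = 0")
    case True then show ?thesis using assms(1) by simp
  next
    case False
    have IH: "((f \<circ> transpose x y)^^j) z = (f^^j) w" by (rule Suc.IH) (use False Suc.prems in auto)
    have nxy: "(f^^j) w \<noteq> x \<and> (f^^j) w \<noteq> y" using assms(2) False Suc.prems by simp
    have "((f \<circ> transpose x y)^^Suc j) z = f (transpose x y (((f \<circ> transpose x y)^^j) z))" by (simp only: funpow.simps(2) o_apply)
    also have "\<dots> = f (transpose x y ((f^^j) w))" by (simp only: IH)
    also have "\<dots> = f ((f^^j) w)" using nxy by (simp add: transpose_def)
    also have "\<dots> = (f^^Suc j) w" by simp
    finally show ?thesis .
  qed
qed

locale finite_injection =
  fixes X :: "'a set" and f :: "'a \<Rightarrow> 'a"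
  assumes finite_carrier: "finite X" and closed: "\<And>x. x \<in> X \<Longrightarrow> f x \<in> X" and inj: "inj_on f X"
begin

lemma funpow_in: "x \<in> X \<Longrightarrow> (f ^^ i) x \<in> X"
  by (induction i) (auto simp: closed)

lemma orbit_subset: "x \<in> X \<Longrightarrow> orbit f x \<subseteq> X"
  unfolding orbit_def using funpow_in by auto

lemma funpow_inj: "x \<in> X \<Longrightarrow> y \<in> X \<Longrightarrow> (f ^^ i) x = (f ^^ i) y \<Longrightarrow> x = y"
proof (induction i arbitrary: x y)
  case 0 then show ?case by simp
next
  case (Suc i)
  have "f x = f y" using Suc.prems Suc.IH[of "f x" "f y"] closed
    by (simp add: funpow_Suc_right del: funpow.simps)
  then show ?case using inj Suc.prems by (auto dest: inj_onD)
qed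

lemma ex_period: assumes "x \<in> X" shows "\<exists>p>0. (f ^^ p) x = x"
proof -
  have ninj: "\<not> inj_on (\<lambda>i. (f ^^ i) x) {..card X}"
  proof
    assume a: "inj_on (\<lambda>i. (f ^^ i) x) {..card X}"
    have "(\<lambda>i. (f ^^ i) x) ` {..card X} \<subseteq> X" using funpow_in assms by auto
    then have "card ((\<lambda>i. (f ^^ i) x) ` {..card X}) \<le> card X" using finite_carrier card_mono by blast
    then show False using card_image[OF a] by simp
  qed
  then obtain i j where ij: "i \<noteq> j" "(f^^i) x = (f^^j) x" by (auto simp: inj_on_def)
  have *: "\<exists>p>0. (f ^^ p) x = x" if "i < j" "(f^^i) x = (f^^j) x" for i j
  proof -
    have "(f^^j) x = (f^^i) ((f^^(j-i)) x)" using that by (intro funpow_split) simp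
    then have "(f^^i) x = (f^^i) ((f^^(j-i)) x)" using that by simp
    then have "x = (f^^(j-i)) x" by (rule funpow_inj[OF assms funpow_in[OF assms]])
    moreover have "j - i > 0" using that by simp
    ultimately show ?thesis by metis
  qed
  show ?thesis using ij *[of i j] *[of j i] by (cases "i < j") auto
qed

definition period :: "'a \<Rightarrow> nat" where
  "period x = (LEAST p. p > 0 \<and> (f ^^ p) x = x)"

lemma period: assumes "x \<in> X" shows "period x > 0" "(f ^^ period x) x = x"
  using LeastI_ex[OF ex_period[OF assms]] unfolding period_def by auto

lemma period_least: "0 < q \<Longrightarrow> q < period x \<Longrightarrow> (f ^^ q) x \<noteq> x"
  unfolding period_def using not_less_Least by blast

lemma orbit_sym: assumes "x \<in> X" "y \<in> orbit f x" shows "x \<in> orbit f y"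
proof -
  obtain i where y: "y = (f ^^ i) x" using assms unfolding orbit_def by auto
  obtain p where p: "p > 0" "(f ^^ p) x = x" using ex_period assms by blast
  have le: "i \<le> p * Suc i" using p(1) by (simp add: trans_le_add2)
  have "(f ^^ (p * Suc i - i)) y = (f ^^ (p * Suc i - i + i)) x" using y
    by (simp add: funpow_add)
  also have "\<dots> = (f ^^ (p * Suc i)) x" using le by simp
  also have "\<dots> = x" using funpow_mult_period[OF p(2), of "Suc i"] by (simp add: mult.commute)
  finally show ?thesis using orbit_funpow by metis
qed

lemma orbit_eq: "x \<in> X \<Longrightarrow> y \<in> orbit f x \<Longrightarrow> orbit f y = orbit f x"
  using orbit_trans orbit_sym by (metis subsetI subset_antisym)

lemma inj_on_period: assumes "x \<in> X" shows "inj_on (\<lambda>i. (f ^^ i) x) {1..period x}"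
proof (rule inj_onI)
  fix i j assume ij: "i \<in> {1..period x}" "j \<in> {1..period x}" "(f ^^ i) x = (f ^^ j) x"
  have *: False if "i < j" "i \<in> {1..period x}" "j \<in> {1..period x}" "(f ^^ i) x = (f ^^ j) x" for i j
  proof -
    have "(f^^j) x = (f^^i) ((f^^(j-i)) x)" using that by (intro funpow_split) simp
    then have "(f^^i) x = (f^^i) ((f^^(j-i)) x)" using that by simp
    then have "x = (f^^(j-i)) x" by (rule funpow_inj[OF assms funpow_in[OF assms]])
    moreover have "j - i < period x" "0 < j - i" using that by auto
    ultimately show False using period_least[of "j-i" x] by simp
  qed
  show "i = j"
  proof (cases i j rule: linorder_cases)
    case less then show ?thesis using *[of i j] ij by blast
  next
    case greater then show ?thesis using *[of j i] ij by simp
  qed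
qed

lemma finite_injection_transpose: assumes "x \<in> X" "y \<in> X" shows "finite_injection X (f \<circ> transpose x y)"
proof
  show "finite X" by (rule finite_carrier)
  show "(f \<circ> transpose x y) z \<in> X" if "z \<in> X" for z
    using that assms closed by (simp add: transpose_def)
  have "transpose x y ` X = X" using assms by simp
  then show "inj_on (f \<circ> transpose x y) X" using inj by (simp add: comp_inj_on)
qed

lemma orbit_transpose_arc:
  assumes "x \<in> X" "x \<noteq> y" "(f^^d) x = y" "\<forall>j<d. (f^^j) x \<noteq> y"
  shows "orbit (f \<circ> transpose x y) y = (\<lambda>j. (f^^j) x) ` {1..d}"
proof -
  let ?h = "f \<circ> transpose x y"
  have d0: "d > 0" using assms by (cases d) auto
  have y: "y \<in> X" using assms funpow_in by blast
  have nx: "(f^^j) x \<noteq> x" if "0 < j" "j < d" for j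
  proof
    assume a: "(f^^j) x = x"
    have "(f^^d) x = (f^^(d-j)) ((f^^(d-(d-j))) x)" by (rule funpow_split) simp
    then have "(f^^(d-j)) x = y" using assms(3) a that by simp
    moreover have "d - j < d" using that by simp
    ultimately show False using assms(4) by blast
  qed
  have h1: "?h y = f x" using assms(2) by (simp add: transpose_def)
  have key: "(?h^^j) y = (f^^j) x" if "0 < j" "j \<le> d" for j
    by (rule funpow_transpose_run[OF h1 _ that]) (use nx assms(4) in auto)
  have "(?h^^d) y = y" using key[of d] d0 assms(3) by simp
  then have "orbit ?h y = (\<lambda>j. (?h^^j) y) ` {1..d}" by (rule orbit_eq_period_image[OF _ d0])
  also have "\<dots> = (\<lambda>j. (f^^j) x) ` {1..d}" using key by (intro image_cong) auto
  finally show ?thesis .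
qed

lemma orbit_transpose_rest:
  assumes "x \<in> X" "x \<noteq> y" "(f^^d) x = y" "\<forall>j<d. (f^^j) x \<noteq> y"
  shows "orbit (f \<circ> transpose x y) x = orbit f x - orbit (f \<circ> transpose x y) y"
proof -
  let ?p = "period x"
  have p: "?p > 0" "(f^^?p) x = x" using period assms(1) by auto
  have d0: "0 < d" using assms by (cases d) auto
  have dp: "d < ?p"
  proof (rule ccontr)
    assume a: "\<not> d < ?p"
    have "(f^^d) x = (f^^(d-?p)) ((f^^(d-(d-?p))) x)" by (rule funpow_split) simp
    then have "(f^^(d-?p)) x = y" using a p assms(3) by simp
    moreover have "d - ?p < d" using p(1) d0 by simp
    ultimately show False using assms(4) by blast
  qed
  let ?d' = "?p - d"
  have y: "y \<in> X" using assms funpow_in by blast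
  have yd: "(f^^j) y = (f^^(j+d)) x" for j using assms(3) by (simp add: funpow_add)
  have "(f^^?d') y = x" using yd[of ?d'] dp p by simp
  moreover have "\<forall>j<?d'. (f^^j) y \<noteq> x"
  proof (intro allI impI)
    fix j assume "j < ?d'"
    then show "(f^^j) y \<noteq> x" using yd[of j] period_least[of "j+d" x] d0 by simp
  qed
  ultimately have "orbit (f \<circ> transpose y x) x = (\<lambda>j. (f^^j) y) ` {1..?d'}"
    using orbit_transpose_arc[of y x ?d'] y assms(2) by simp
  then have A: "orbit (f \<circ> transpose x y) x = (\<lambda>j. (f^^j) y) ` {1..?d'}" by (simp add: transpose_commute)
  have B: "orbit (f \<circ> transpose x y) y = (\<lambda>j. (f^^j) x) ` {1..d}" by (rule orbit_transpose_arc[OF assms])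
  have C: "orbit f x = (\<lambda>j. (f^^j) x) ` {1..?p}" by (rule orbit_eq_period_image[OF p(2) p(1)])
  have "(\<lambda>j. (f^^j) x) ` {1..?p} - (\<lambda>j. (f^^j) x) ` {1..d} = (\<lambda>j. (f^^j) x) ` ({1..?p} - {1..d})"
    using inj_on_image_set_diff[OF inj_on_period[OF assms(1)]] dp by auto
  also have "{1..?p} - {1..d} = (\<lambda>j. j + d) ` {1..?d'}"
  proof -
    have "{1..?p} - {1..d} = {Suc d..?p}" using d0 by auto
    also have "\<dots> = (\<lambda>j. j + d) ` {1..?d'}"
    proof
      show "{Suc d..?p} \<subseteq> (\<lambda>j. j + d) ` {1..?d'}"
      proof
        fix i assume "i \<in> {Suc d..?p}"
        then show "i \<in> (\<lambda>j. j + d) ` {1..?d'}" by (intro image_eqI[of _ _ "i - d"]) auto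
      qed
    qed auto
    finally show ?thesis .
  qed
  also have "(\<lambda>j. (f^^j) x) ` ((\<lambda>j. j + d) ` {1..?d'}) = (\<lambda>j. (f^^j) y) ` {1..?d'}"
    unfolding image_image by (rule image_cong[OF refl]) (simp add: yd)
  finally show ?thesis using A B C by simp
qed

lemma orbit_transpose_split:
  assumes "x \<in> X" "y \<in> orbit f x" "x \<noteq> y"
  shows "orbit (f \<circ> transpose x y) x \<union> orbit (f \<circ> transpose x y) y = orbit f x"
    "orbit (f \<circ> transpose x y) x \<inter> orbit (f \<circ> transpose x y) y = {}"
proof -
  obtain i where "(f^^i) x = y" using assms(2) unfolding orbit_def by auto
  define d where "d = (LEAST d. (f^^d) x = y)"
  have d: "(f^^d) x = y" unfolding d_def by (rule LeastI[of _ i]) fact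
  have dm: "\<forall>j<d. (f^^j) x \<noteq> y" unfolding d_def using not_less_Least by blast
  have B: "orbit (f \<circ> transpose x y) y = (\<lambda>j. (f^^j) x) ` {1..d}" by (rule orbit_transpose_arc[OF assms(1,3) d dm])
  have "orbit (f \<circ> transpose x y) y \<subseteq> orbit f x" unfolding B by (auto simp: orbit_def)
  then show "orbit (f \<circ> transpose x y) x \<union> orbit (f \<circ> transpose x y) y = orbit f x"
    "orbit (f \<circ> transpose x y) x \<inter> orbit (f \<circ> transpose x y) y = {}"
    using orbit_transpose_rest[OF assms(1,3) d dm] by auto
qed

text \<open>Transposing points \<open>x\<close>, \<open>y\<close> of different cycles splices the cycle of \<open>y\<close> in front of that of \<open>x\<close>.\<close>

lemma funpow_transpose_merge:
  assumes "x \<in> X" "y \<in> X" "y \<notin> orbit f x"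
  shows "0 < j \<Longrightarrow> j \<le> period y \<Longrightarrow> ((f \<circ> transpose x y) ^^ j) x = (f ^^ j) y"
    and "0 < j \<Longrightarrow> j \<le> period x \<Longrightarrow> ((f \<circ> transpose x y) ^^ (j + period y)) x = (f ^^ j) x"
proof -
  let ?h = "f \<circ> transpose x y"
  have xny: "x \<notin> orbit f y" using orbit_sym assms by blast
  have h1: "?h x = f y" by simp
  have A: "(?h ^^ j) x = (f ^^ j) y" if "0 < j" "j \<le> period y" for j
  proof (rule funpow_transpose_run[OF h1 _ that], intro allI impI)
    fix i assume "0 < i \<and> i < period y"
    then show "(f ^^ i) y \<noteq> x \<and> (f ^^ i) y \<noteq> y"
      using period_least[of i y] orbit_funpow[where f=f and i=i and x=y] xny by auto
  qed
  then show "0 < j \<Longrightarrow> j \<le> period y \<Longrightarrow> ((f \<circ> transpose x y) ^^ j) x = (f ^^ j) y" .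
  have h2: "?h y = f x" by simp
  have B: "(?h ^^ j) y = (f ^^ j) x" if "0 < j" "j \<le> period x" for j
  proof (rule funpow_transpose_run[OF h2 _ that], intro allI impI)
    fix i assume "0 < i \<and> i < period x"
    then show "(f ^^ i) x \<noteq> x \<and> (f ^^ i) x \<noteq> y"
      using period_least[of i x] orbit_funpow[where f=f and i=i and x=x] assms(3) by auto
  qed
  have "(?h ^^ period y) x = y" using A[of "period y"] period[OF assms(2)] by simp
  then show "0 < j \<Longrightarrow> j \<le> period x \<Longrightarrow> ((f \<circ> transpose x y) ^^ (j + period y)) x = (f ^^ j) x"
    using B by (simp add: funpow_add)
qed

lemma orbit_transpose_merge:
  assumes "x \<in> X" "y \<in> X" "y \<notin> orbit f x"
  shows "orbit (f \<circ> transpose x y) x = orbit f x \<union> orbit f y"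
proof -
  let ?h = "f \<circ> transpose x y"
  let ?px = "period x" let ?py = "period y"
  note A = funpow_transpose_merge(1)[OF assms] and B = funpow_transpose_merge(2)[OF assms]
  have px: "?px > 0" "(f ^^ ?px) x = x" using period assms by auto
  have py: "?py > 0" "(f ^^ ?py) y = y" using period assms by auto
  have "(?h ^^ (?px + ?py)) x = x" using B[of ?px] px by simp
  then have O: "orbit ?h x = (\<lambda>i. (?h ^^ i) x) ` {1..?px + ?py}"
    by (rule orbit_eq_period_image) (use px in simp_all)
  show ?thesis
  proof
    show "orbit ?h x \<subseteq> orbit f x \<union> orbit f y"
    proof
      fix z assume "z \<in> orbit ?h x"
      then obtain i where i: "i \<in> {1..?px + ?py}" "z = (?h ^^ i) x" using O by auto
      show "z \<in> orbit f x \<union> orbit f y"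
      proof (cases "i \<le> ?py")
        case True then show ?thesis using A[of i] i by (simp add: orbit_funpow)
      next
        case False
        then have "z = (f ^^ (i - ?py)) x" using B[of "i - ?py"] i by simp
        then show ?thesis using orbit_funpow by auto
      qed
    qed
    show "orbit f x \<union> orbit f y \<subseteq> orbit ?h x"
    proof
      fix z assume "z \<in> orbit f x \<union> orbit f y"
      then show "z \<in> orbit ?h x"
      proof
        assume "z \<in> orbit f x"
        then obtain j where "j \<in> {1..?px}" "z = (f ^^ j) x" using orbit_eq_period_image[OF px(2) px(1)] by auto
        then show ?thesis using B[of j] orbit_funpow by (metis atLeastAtMost_iff less_eq_Suc_le One_nat_def)
      next
        assume "z \<in> orbit f y"
        then obtain j where "j \<in> {1..?py}" "z = (f ^^ j) y" using orbit_eq_period_image[OF py(2) py(1)] by auto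
        then show ?thesis using A[of j] orbit_funpow by (metis atLeastAtMost_iff less_eq_Suc_le One_nat_def)
      qed
    qed
  qed
qed

lemma orbit_double_merge:
  assumes X: "x1 \<in> X" "y1 \<in> X" "x2 \<in> X" "y2 \<in> X"
    and d1: "y1 \<notin> orbit f x1" and d2: "y2 \<notin> orbit f x2"
    and o1: "x2 \<notin> orbit f x1 \<union> orbit f y1" and o2: "y2 \<notin> orbit f x1 \<union> orbit f y1"
    and w: "w \<in> X"
  shows "orbit f w \<subseteq> orbit ((f \<circ> transpose x1 y1) \<circ> transpose x2 y2) w"
proof -
  let ?H = "f \<circ> transpose x1 y1"
  let ?G = "?H \<circ> transpose x2 y2"
  interpret H: finite_injection X ?H by (rule finite_injection_transpose[OF X(1,2)])
  have M1: "orbit ?H x1 = orbit f x1 \<union> orbit f y1" by (rule orbit_transpose_merge[OF X(1,2) d1])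
  have x2u: "orbit ?H x2 = orbit f x2"
    by (rule orbit_transpose_outside) (use o1 orbit_sym[OF X(3)] orbit_sym[OF X(3)] in blast)+
  have y2u: "orbit ?H y2 = orbit f y2"
    by (rule orbit_transpose_outside) (use o2 orbit_sym[OF X(4)] in blast)+
  have d2H: "y2 \<notin> orbit ?H x2" using x2u d2 by simp
  have M2: "orbit ?G x2 = orbit ?H x2 \<union> orbit ?H y2" by (rule H.orbit_transpose_merge[OF X(3,4) d2H])
  have x1G: "orbit ?G x1 = orbit ?H x1"
    by (rule orbit_transpose_outside) (use M1 o1 o2 in blast)+
  show ?thesis
  proof (cases "w \<in> orbit f x1 \<union> orbit f y1")
    case True
    then have "w \<in> orbit ?G x1" using x1G M1 by simp
    then have "orbit ?G w = orbit ?G x1" using finite_injection.orbit_eq[OF finite_injection_transpose[OF X(1,2)] ] H.finite_injection_transpose[OF X(3,4)] X(1)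
      by (metis H.finite_injection_transpose finite_injection.orbit_eq)
    moreover have "orbit f w \<subseteq> orbit f x1 \<union> orbit f y1"
      using True orbit_eq[OF X(1)] orbit_eq[OF X(2)] by blast
    ultimately show ?thesis using x1G M1 by simp
  next
    case False
    then have "x1 \<notin> orbit f w" "y1 \<notin> orbit f w" using orbit_sym[OF w] by blast+
    then have wH: "orbit ?H w = orbit f w" by (rule orbit_transpose_outside)
    show ?thesis
    proof (cases "w \<in> orbit ?H x2 \<union> orbit ?H y2")
      case True
      then have "w \<in> orbit ?G x2" using M2 by simp
      then have "orbit ?G w = orbit ?G x2" by (metis H.finite_injection_transpose[OF X(3,4)] finite_injection.orbit_eq X(3))
      have "orbit ?H w \<subseteq> orbit ?H x2 \<union> orbit ?H y2"
      proof (cases "w \<in> orbit ?H x2")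
        case True then show ?thesis using H.orbit_eq[OF X(3) True] by simp
      next
        case False
        then have "w \<in> orbit ?H y2" using \<open>w \<in> orbit ?H x2 \<union> orbit ?H y2\<close> by simp
        then show ?thesis using H.orbit_eq[OF X(4)] by simp
      qed
      then show ?thesis using M2 wH \<open>orbit ?G w = orbit ?G x2\<close> by simp
    next
      case False
      then have "x2 \<notin> orbit ?H w" "y2 \<notin> orbit ?H w" using H.orbit_sym[OF w] by blast+
      then have "orbit ?G w = orbit ?H w" by (rule orbit_transpose_outside)
      then show ?thesis using wH by simp
    qed
  qed
qed

lemma orbit_notin: "w \<in> X \<Longrightarrow> w \<notin> orbit f z \<Longrightarrow> z' \<in> orbit f z \<Longrightarrow> z' \<notin> orbit f w"
  using orbit_sym[of w z'] orbit_trans[of z' f z w] by blast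

lemma orbit_eq_either: "a \<in> X \<Longrightarrow> b \<in> X \<Longrightarrow> w \<in> orbit f a \<union> orbit f b
    \<Longrightarrow> orbit f w = orbit f a \<or> orbit f w = orbit f b"
  using orbit_eq[of a w] orbit_eq[of b w] by blast

lemma orbit_merge_split:
  assumes X: "x1 \<in> X" "y1 \<in> X" and d1: "y1 \<notin> orbit f x1"
    and x2: "x2 \<in> orbit f x1 \<union> orbit f y1" and y2: "y2 \<in> orbit f x1 \<union> orbit f y1" and ne: "x2 \<noteq> y2"
  shows "\<And>w. w \<in> X \<Longrightarrow> w \<notin> orbit f x1 \<union> orbit f y1
      \<Longrightarrow> orbit ((f \<circ> transpose x1 y1) \<circ> transpose x2 y2) w = orbit f w"
    and "orbit ((f \<circ> transpose x1 y1) \<circ> transpose x2 y2) x2 \<union> orbit ((f \<circ> transpose x1 y1) \<circ> transpose x2 y2) y2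
      = orbit f x1 \<union> orbit f y1"
    and "\<And>w. w \<in> orbit f x1 \<union> orbit f y1 \<Longrightarrow> orbit ((f \<circ> transpose x1 y1) \<circ> transpose x2 y2) w
        = orbit ((f \<circ> transpose x1 y1) \<circ> transpose x2 y2) x2
         \<or> orbit ((f \<circ> transpose x1 y1) \<circ> transpose x2 y2) w = orbit ((f \<circ> transpose x1 y1) \<circ> transpose x2 y2) y2"
proof -
  let ?H = "f \<circ> transpose x1 y1"
  let ?G = "?H \<circ> transpose x2 y2"
  interpret H: finite_injection X ?H by (rule finite_injection_transpose[OF X(1,2)])
  have M1: "orbit ?H x1 = orbit f x1 \<union> orbit f y1" by (rule orbit_transpose_merge[OF X(1,2) d1])
  have x2X: "x2 \<in> X" "y2 \<in> X" using x2 y2 orbit_subset X by blast+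
  interpret G: finite_injection X ?G by (rule H.finite_injection_transpose[OF x2X])
  have x2H: "orbit ?H x2 = orbit ?H x1" using H.orbit_eq[OF X(1), of x2] x2 M1 by simp
  have y2H: "y2 \<in> orbit ?H x2" using x2H M1 y2 by simp
  have S: "orbit ?G x2 \<union> orbit ?G y2 = orbit ?H x2" by (rule H.orbit_transpose_split(1)[OF x2X(1) y2H ne])
  show "orbit ?G x2 \<union> orbit ?G y2 = orbit f x1 \<union> orbit f y1" using S x2H M1 by simp
  show "orbit ?G w = orbit f w" if "w \<in> X" "w \<notin> orbit f x1 \<union> orbit f y1" for w
  proof -
    have n1: "w \<notin> orbit f x1" "w \<notin> orbit f y1" using that by auto
    have "x1 \<notin> orbit f w" using orbit_notin[OF that(1) n1(1) orbit_self] .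
    moreover have "y1 \<notin> orbit f w" using orbit_notin[OF that(1) n1(2) orbit_self] .
    ultimately have wH: "orbit ?H w = orbit f w" by (rule orbit_transpose_outside)
    have "x2 \<notin> orbit f w" using x2 orbit_notin[OF that(1) n1(1)] orbit_notin[OF that(1) n1(2)] by blast
    moreover have "y2 \<notin> orbit f w" using y2 orbit_notin[OF that(1) n1(1)] orbit_notin[OF that(1) n1(2)] by blast
    ultimately have "orbit ?G w = orbit ?H w" using orbit_transpose_outside[where f="?H" and x=x2 and y=y2 and w=w] wH by simp
    then show ?thesis using wH by simp
  qed
  show "orbit ?G w = orbit ?G x2 \<or> orbit ?G w = orbit ?G y2" if "w \<in> orbit f x1 \<union> orbit f y1" for w
    by (rule G.orbit_eq_either[OF x2X]) (use that S x2H M1 in simp)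
qed

lemma orbit_split_disjoint:
  assumes X: "x1 \<in> X" and y1: "y1 \<in> orbit f x1" "x1 \<noteq> y1"
    and x2: "x2 \<in> X" and y2: "y2 \<in> orbit f x2" and d: "x2 \<notin> orbit f x1"
  shows "\<And>w. w \<in> X \<Longrightarrow> w \<notin> orbit f x1 \<union> orbit f x2
      \<Longrightarrow> orbit ((f \<circ> transpose x1 y1) \<circ> transpose x2 y2) w = orbit f w"
    and "\<And>w. w \<in> orbit f x1 \<Longrightarrow> orbit ((f \<circ> transpose x1 y1) \<circ> transpose x2 y2) w = orbit (f \<circ> transpose x1 y1) x1
         \<or> orbit ((f \<circ> transpose x1 y1) \<circ> transpose x2 y2) w = orbit (f \<circ> transpose x1 y1) y1"
proof -
  let ?H = "f \<circ> transpose x1 y1"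
  let ?G = "?H \<circ> transpose x2 y2"
  have y1X: "y1 \<in> X" using y1 orbit_subset X by blast
  have y2X: "y2 \<in> X" using y2 orbit_subset x2 by blast
  interpret H: finite_injection X ?H by (rule finite_injection_transpose[OF X y1X])
  have S: "orbit ?H x1 \<union> orbit ?H y1 = orbit f x1" by (rule orbit_transpose_split(1)[OF X y1(1) y1(2)])
  have dx: "x1 \<notin> orbit f x2" using orbit_notin[OF x2 d orbit_self] .
  have dy: "y1 \<notin> orbit f x2" using orbit_notin[OF x2 d y1(1)] .
  have x2H: "orbit ?H x2 = orbit f x2" by (rule orbit_transpose_outside[OF dx dy])
  show "orbit ?G w = orbit f w" if "w \<in> X" "w \<notin> orbit f x1 \<union> orbit f x2" for w
  proof -
    have n1: "w \<notin> orbit f x1" "w \<notin> orbit f x2" using that by auto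
    have wH: "orbit ?H w = orbit f w" by (rule orbit_transpose_outside[OF orbit_notin[OF that(1) n1(1) orbit_self] orbit_notin[OF that(1) n1(1) y1(1)]])
    have "orbit ?G w = orbit ?H w"
      using orbit_transpose_outside[where f="?H" and x=x2 and y=y2 and w=w] wH orbit_notin[OF that(1) n1(2) orbit_self] orbit_notin[OF that(1) n1(2) y2]
      by simp
    then show ?thesis using wH by simp
  qed
  show "orbit ?G w = orbit ?H x1 \<or> orbit ?G w = orbit ?H y1" if "w \<in> orbit f x1" for w
  proof -
    have wo: "orbit ?H w = orbit ?H x1 \<or> orbit ?H w = orbit ?H y1"
      by (rule H.orbit_eq_either[OF X y1X]) (use that S in simp)
    then have sub: "orbit ?H w \<subseteq> orbit f x1" using S by auto
    have "x2 \<notin> orbit f x1" by (rule d)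
    have "y2 \<notin> orbit f x1" using orbit_notin[OF X _ y2] orbit_notin[OF x2 d orbit_self] orbit_sym[OF x2]
      by (metis X orbit_eq x2)
    then have "x2 \<notin> orbit ?H w" "y2 \<notin> orbit ?H w" using sub d by auto
    then have "orbit ?G w = orbit ?H w" by (rule orbit_transpose_outside)
    then show ?thesis using wo by simp
  qed
qed

end

lemma finite_V: "finite (V n)"
  by (simp add: V_def)

lemma E_eq_subsets: "E n = {e. e \<subseteq> V n \<and> card e = 2}"
  unfolding E_def by (auto simp: card_2_iff)

lemma E_subset_card: "e \<in> E n \<Longrightarrow> e \<subseteq> V n \<and> card e = 2"
  by (simp add: E_eq_subsets)

lemma pair_in_E: "a \<in> V n \<Longrightarrow> b \<in> V n \<Longrightarrow> a \<noteq> b \<Longrightarrow> {a, b} \<in> E n"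
  unfolding E_def by blast

lemma finite_E: "finite (E n)"
  by (rule finite_subset[of _ "Pow (V n)"]) (auto simp: E_eq_subsets finite_V)

lemma card_E: "2 * card (E n) = n * (n - 1)"
proof -
  have "card (E n) = n * (n - 1) div 2"
    unfolding E_eq_subsets choose_two[symmetric] using n_subsets[of "V n" 2] by (simp add: V_def)
  moreover have "even (n * (n - 1))" by (cases "even n") auto
  ultimately show ?thesis by simp
qed

lemma real_card_E: "real (card (E n)) = real n * (real n - 1) / 2"
proof -
  have "real (2 * card (E n)) = real (n * (n - 1))"
    by (simp only: card_E)
  then show ?thesis by (cases n) (simp_all add: algebra_simps)
qed

lemma card_edges_at_le:
  assumes "v \<in> V n"
  shows "card {e \<in> E n. P e \<and> v \<in> e} \<le> card {b \<in> V n. b \<noteq> v \<and> P {v, b}}"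
proof -
  have "{e \<in> E n. P e \<and> v \<in> e} \<subseteq> (\<lambda>b. {v, b}) ` {b \<in> V n. b \<noteq> v \<and> P {v, b}}"
  proof
    fix e assume e: "e \<in> {e \<in> E n. P e \<and> v \<in> e}"
    then obtain x y where xy: "e = {x, y}" "x \<in> V n" "y \<in> V n" "x \<noteq> y" unfolding E_def by auto
    show "e \<in> (\<lambda>b. {v, b}) ` {b \<in> V n. b \<noteq> v \<and> P {v, b}}"
    proof (cases "v = x")
      case True
      then show ?thesis using e xy by (intro image_eqI[of _ _ y]) auto
    next
      case False
      then have "v = y" using e xy by auto
      then show ?thesis using e xy by (intro image_eqI[of _ _ x]) (auto simp: insert_commute)
    qed
  qed
  then have "card {e \<in> E n. P e \<and> v \<in> e} \<le> card ((\<lambda>b. {v, b}) ` {b \<in> V n. b \<noteq> v \<and> P {v, b}})"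
    by (intro card_mono) (auto simp: finite_V)
  also have "\<dots> \<le> card {b \<in> V n. b \<noteq> v \<and> P {v, b}}"
    by (rule card_image_le) (simp add: finite_V)
  finally show ?thesis .
qed

lemma card_edges_double_count:
  assumes "\<And>v. v \<in> V n \<Longrightarrow> card {b \<in> V n. b \<noteq> v \<and> P {v, b}} \<le> c"
  shows "2 * card {e \<in> E n. P e} \<le> c * n"
proof -
  let ?B = "{e \<in> E n. P e}"
  have finB: "finite ?B" using finite_E by simp
  have card_eq_sum: "card e = (\<Sum>v\<in>V n. if v \<in> e then 1 else 0)" if "e \<in> E n" for e
  proof -
    have "{v \<in> V n. v \<in> e} = e" using E_subset_card[OF that] by auto
    then show ?thesis using sum.inter_filter[OF finite_V[of n], of "\<lambda>_. 1::nat" "\<lambda>v. v \<in> e"] by simp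
  qed
  have "2 * card ?B = (\<Sum>e\<in>?B. card e)" using E_subset_card[of _ n] by simp
  also have "\<dots> = (\<Sum>e\<in>?B. \<Sum>v\<in>V n. if v \<in> e then 1 else 0)"
    using card_eq_sum by (intro sum.cong) auto
  also have "\<dots> = (\<Sum>v\<in>V n. \<Sum>e\<in>?B. if v \<in> e then 1 else 0)"
    by (rule sum.swap)
  also have "\<dots> = (\<Sum>v\<in>V n. card {e \<in> ?B. v \<in> e})"
    using sum.inter_filter[OF finB, of "\<lambda>_. 1::nat"] by simp
  also have "\<dots> \<le> (\<Sum>v\<in>V n. c)"
  proof (rule sum_mono)
    fix v assume v: "v \<in> V n"
    have "{e \<in> ?B. v \<in> e} = {e \<in> E n. P e \<and> v \<in> e}" by auto
    then show "card {e \<in> ?B. v \<in> e} \<le> c" using card_edges_at_le[OF v, of P] assms[OF v] by simp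
  qed
  also have "\<dots> = c * n" by (simp add: V_def)
  finally show ?thesis .
qed

text \<open>The empty edge is admitted so that a history padded with the dummy link \<open>({}, Cross)\<close>,
  which touches no vertex, is still valid.\<close>

definition valid_links :: "nat \<Rightarrow> link list \<Rightarrow> bool" where
  "valid_links n L \<longleftrightarrow> (\<forall>l\<in>set L. fst l \<in> E n \<or> fst l = {})"

definition states :: "nat \<Rightarrow> nat \<Rightarrow> (nat \<times> nat \<times> dir) set" where
  "states n N = V n \<times> {..N} \<times> UNIV"

fun opposite :: "dir \<Rightarrow> dir" where
  "opposite Up = Down"
| "opposite Down = Up"

fun rev_state :: "nat \<times> nat \<times> dir \<Rightarrow> nat \<times> nat \<times> dir" where
  "rev_state (v, j, d) = (v, j, opposite d)"

text \<open>The vertices at which a set of states of a history of length \<open>N\<close> crosses height 0,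
  read off as in \<open>same_cycle\<close>.\<close>

definition base_vertices :: "nat \<Rightarrow> nat \<Rightarrow> (nat \<times> nat \<times> dir) set \<Rightarrow> nat set" where
  "base_vertices n N Q = {v \<in> V n. (v, N, Up) \<in> Q \<or> (v, 0, Down) \<in> Q}"

lemma UNIV_dir: "(UNIV :: dir set) = {Up, Down}"
  using dir.exhaust by auto

lemma finite_states: "finite (states n N)"
  unfolding states_def V_def UNIV_dir by simp

lemma opposite_opposite [simp]: "opposite (opposite d) = d"
  by (cases d) simp_all

lemma opposite_neq: "opposite d \<noteq> d"
  by (cases d) simp_all

lemma rev_state_rev_state [simp]: "rev_state (rev_state x) = x"
  by (cases x) simp

lemma rev_state_neq: "rev_state x \<noteq> x"
  by (cases x) (simp add: opposite_neq)

lemma rev_state_in_states: "x \<in> states n N \<Longrightarrow> rev_state x \<in> states n N"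
  by (cases x) (auto simp: states_def)

lemma rev_state_image_image: "rev_state ` rev_state ` A = A"
  by (simp add: image_image)

lemma rev_state_image_inj: "rev_state ` A = rev_state ` B \<Longrightarrow> A = B"
  by (metis rev_state_image_image)

lemma base_vertices_mono: "A \<subseteq> B \<Longrightarrow> base_vertices n N A \<subseteq> base_vertices n N B"
  by (auto simp: base_vertices_def)

lemma base_vertices_Un: "base_vertices n N (A \<union> B) = base_vertices n N A \<union> base_vertices n N B"
  by (auto simp: base_vertices_def)

lemma other_pair: "u \<noteq> w \<Longrightarrow> other {u,w} u = w"
  unfolding other_def by (rule the_equality) auto

lemma other_edge:
  assumes "e \<in> E n" "v \<in> e"
  shows "other e v \<in> V n" "other e v \<noteq> v" "other e (other e v) = v" "other e v \<in> e"
proof -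
  obtain u w where e: "e = {u,w}" "u \<in> V n" "w \<in> V n" "u \<noteq> w" using assms(1) unfolding E_def by auto
  have "v = u \<or> v = w" using assms(2) e by auto
  then show "other e v \<in> V n" "other e v \<noteq> v" "other e (other e v) = v" "other e v \<in> e"
    using e other_pair[of u w] other_pair[of w u] by (auto simp: insert_commute)
qed

locale link_seq =
  fixes n :: nat and L :: "link list"
  assumes valid: "valid_links n L"
begin

lemma other_link:
  assumes "j < length L" "L ! j = (e,m)" "v \<in> e"
  shows "other e v \<in> V n" "other e v \<noteq> v" "other e (other e v) = v" "other e v \<in> e"
proof -
  have "(e,m) \<in> set L" using assms(1,2) nth_mem by metis
  then have "e \<in> E n" using valid assms(3) unfolding valid_links_def by fastforce
  then show "other e v \<in> V n" "other e v \<noteq> v" "other e (other e v) = v" "other e v \<in> e"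
    using other_edge assms(3) by auto
qed

lemma states_cases [consumes 1, case_names top bottom up down]:
  assumes "x \<in> states n (length L)"
  obtains (top) v where "x = (v, length L, Up)"
    | (bottom) v where "x = (v, 0, Down)"
    | (up) v j e m where "x = (v, j, Up)" "v \<in> V n" "j < length L" "L ! j = (e, m)"
    | (down) v j e m where "x = (v, Suc j, Down)" "v \<in> V n" "j < length L" "L ! j = (e, m)"
proof -
  obtain v j d where x: "x = (v, j, d)" "v \<in> V n" "j \<le> length L"
    using assms by (cases x) (auto simp: states_def)
  show thesis
  proof (cases d)
    case Up
    show thesis
    proof (cases "j = length L")
      case False then show thesis using up[of v j "fst (L ! j)" "snd (L ! j)"] x Up by simp
    qed (use top x Up in simp)
  next
    case Down
    show thesis
    proof (cases j)
      case (Suc i) then show thesis using down[of v i "fst (L ! i)" "snd (L ! i)"] x Down by simp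
    qed (use bottom x Down in simp)
  qed
qed

lemma loop_step_in_states:
  assumes "x \<in> states n (length L)"
  shows "loop_step L x \<in> states n (length L)"
  using assms
proof (cases rule: states_cases)
  case (up v j e m)
  then show ?thesis using other_link[OF up(3,4)] by (cases m) (auto simp: states_def Suc_le_eq)
next
  case (down v j e m)
  then show ?thesis using other_link[OF down(3,4)] by (cases m) (auto simp: states_def)
qed (use assms in \<open>auto simp: states_def\<close>)

lemma loop_step_rev_state:
  assumes "x \<in> states n (length L)"
  shows "loop_step L (rev_state (loop_step L x)) = rev_state x"
  using assms
proof (cases rule: states_cases)
  case (up v j e m)
  then show ?thesis using other_link[OF up(3,4)] by (cases m) auto
next
  case (down v j e m)
  then show ?thesis using other_link[OF down(3,4)] by (cases m) auto
qed auto

lemma loop_step_neq_rev_state: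
  assumes "x \<in> states n (length L)"
  shows "loop_step L x \<noteq> rev_state x"
  using assms
proof (cases rule: states_cases)
  case (up v j e m)
  then show ?thesis using other_link[OF up(3,4)] by (cases m) auto
next
  case (down v j e m)
  then show ?thesis using other_link[OF down(3,4)] by (cases m) auto
qed auto

sublocale finite_injection "states n (length L)" "loop_step L"
proof
  show "inj_on (loop_step L) (states n (length L))"
  proof (rule inj_onI)
    fix x y assume "x \<in> states n (length L)" "y \<in> states n (length L)" "loop_step L x = loop_step L y"
    then have "rev_state x = rev_state y" using loop_step_rev_state by metis
    then show "x = y" by (metis rev_state_rev_state)
  qed
qed (use finite_states loop_step_in_states in auto)

lemma funpow_loop_step_rev_state: "x \<in> states n (length L) \<Longrightarrow> (loop_step L ^^ i) (rev_state ((loop_step L ^^ i) x)) = rev_state x"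
proof (induction i arbitrary: x)
  case 0 then show ?case by simp
next
  case (Suc i)
  have "(loop_step L ^^ Suc i) (rev_state ((loop_step L ^^ Suc i) x))
      = (loop_step L ^^ i) (loop_step L (rev_state (loop_step L ((loop_step L ^^ i) x))))"
    by (simp add: funpow_swap1)
  also have "loop_step L (rev_state (loop_step L ((loop_step L ^^ i) x))) = rev_state ((loop_step L ^^ i) x)"
    by (rule loop_step_rev_state[OF funpow_in[OF Suc.prems]])
  finally show ?case using Suc.IH[OF Suc.prems] by simp
qed

text \<open>If the loop through \<open>x\<close> reached \<open>rev_state x\<close> after \<open>t\<close> steps, then after \<open>t div 2\<close>
  steps it would either be at a fixed point of \<open>rev_state\<close> or reverse in a single step.\<close>

lemma rev_state_notin_orbit: assumes "x \<in> states n (length L)" shows "rev_state x \<notin> orbit (loop_step L) x"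
proof
  assume "rev_state x \<in> orbit (loop_step L) x"
  then obtain t where t: "(loop_step L ^^ t) x = rev_state x" by (auto simp: orbit_def)
  have key: "rev_state ((loop_step L ^^ i) x) = (loop_step L ^^ (t-i)) x" if "i \<le> t" for i
  proof -
    have "(loop_step L ^^ i) (rev_state ((loop_step L ^^ i) x)) = rev_state x" by (rule funpow_loop_step_rev_state[OF assms])
    also have "\<dots> = (loop_step L ^^ i) ((loop_step L ^^ (t-i)) x)"
      using t funpow_split[OF that, of "loop_step L" x] by simp
    finally show ?thesis by (rule funpow_inj[OF rev_state_in_states[OF funpow_in[OF assms]] funpow_in[OF assms]])
  qed
  show False
  proof (cases "even t")
    case True
    then obtain i where i: "t = 2 * i" by auto
    then have "rev_state ((loop_step L ^^ i) x) = (loop_step L ^^ i) x" using key[of i] by simp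
    then show False using rev_state_neq by metis
  next
    case False
    then obtain i where i: "t = 2 * i + 1" by (metis oddE)
    then have "rev_state ((loop_step L ^^ i) x) = loop_step L ((loop_step L ^^ i) x)" using key[of i] by simp
    then show False using loop_step_neq_rev_state[OF funpow_in[OF assms]] by metis
  qed
qed

lemma rev_state_orbit_subset: assumes "x \<in> states n (length L)"
  shows "rev_state ` orbit (loop_step L) x \<subseteq> orbit (loop_step L) (rev_state x)"
proof
  fix z assume "z \<in> rev_state ` orbit (loop_step L) x"
  then obtain i where z: "z = rev_state ((loop_step L ^^ i) x)" by (auto simp: orbit_def)
  have "rev_state x \<in> orbit (loop_step L) z" using funpow_loop_step_rev_state[OF assms, of i] z orbit_funpow by metis
  moreover have "z \<in> states n (length L)" using z rev_state_in_states funpow_in assms by simp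
  ultimately show "z \<in> orbit (loop_step L) (rev_state x)" using orbit_sym by blast
qed

lemma orbit_rev_state:
  assumes "x \<in> states n (length L)"
  shows "orbit (loop_step L) (rev_state x) = rev_state ` orbit (loop_step L) x"
proof
  show "orbit (loop_step L) (rev_state x) \<subseteq> rev_state ` orbit (loop_step L) x"
  proof
    fix z assume "z \<in> orbit (loop_step L) (rev_state x)"
    then have "rev_state z \<in> orbit (loop_step L) x"
      using rev_state_orbit_subset[OF rev_state_in_states[OF assms]] by auto
    then show "z \<in> rev_state ` orbit (loop_step L) x"
      using image_eqI[of z rev_state "rev_state z"] by simp
  qed
qed (rule rev_state_orbit_subset[OF assms])

lemma base_vertices_orbit_rev_subset:
  assumes "x \<in> states n (length L)"
  shows "base_vertices n (length L) (orbit (loop_step L) x)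
    \<subseteq> base_vertices n (length L) (orbit (loop_step L) (rev_state x))"
proof
  fix v assume "v \<in> base_vertices n (length L) (orbit (loop_step L) x)"
  then have v: "v \<in> V n"
    and base: "(v, length L, Up) \<in> orbit (loop_step L) x \<or> (v, 0, Down) \<in> orbit (loop_step L) x"
    by (auto simp: base_vertices_def)
  from base show "v \<in> base_vertices n (length L) (orbit (loop_step L) (rev_state x))"
  proof
    assume "(v, length L, Up) \<in> orbit (loop_step L) x"
    then have "(v, 0, Up) \<in> orbit (loop_step L) x" using orbit_step by fastforce
    then have "rev_state (v, 0, Up) \<in> orbit (loop_step L) (rev_state x)" using orbit_rev_state[OF assms] by blast
    then show ?thesis using v by (simp add: base_vertices_def)
  next
    assume "(v, 0, Down) \<in> orbit (loop_step L) x"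
    then have "(v, length L, Down) \<in> orbit (loop_step L) x" using orbit_step by fastforce
    then have "rev_state (v, length L, Down) \<in> orbit (loop_step L) (rev_state x)"
      using orbit_rev_state[OF assms] by blast
    then show ?thesis using v by (simp add: base_vertices_def)
  qed
qed

lemma base_vertices_orbit_rev_state: assumes "x \<in> states n (length L)"
  shows "base_vertices n (length L) (orbit (loop_step L) (rev_state x)) = base_vertices n (length L) (orbit (loop_step L) x)"
  using base_vertices_orbit_rev_subset[OF assms] base_vertices_orbit_rev_subset[OF rev_state_in_states[OF assms]] by simp

lemma orbit_not_both_base: assumes "x \<in> states n (length L)"
  shows "\<not> ((v, length L, Up) \<in> orbit (loop_step L) x \<and> (v,0,Down) \<in> orbit (loop_step L) x)"
proof
  assume a: "(v, length L, Up) \<in> orbit (loop_step L) x \<and> (v,0,Down) \<in> orbit (loop_step L) x"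
  then have w: "(v, 0, Up) \<in> orbit (loop_step L) x" using orbit_step by fastforce
  then have wX: "(v,0,Up) \<in> states n (length L)" using orbit_subset[OF assms] by blast
  have "orbit (loop_step L) (v,0,Up) = orbit (loop_step L) x" by (rule orbit_eq[OF assms w])
  then have "rev_state (v,0,Up) \<in> orbit (loop_step L) (v,0,Up)" using a by simp
  then show False using rev_state_notin_orbit[OF wX] by simp
qed

lemma same_cycle_orbit:
  "same_cycle L u v \<longleftrightarrow> (v, length L, Up) \<in> orbit (loop_step L) (u, length L, Up)
     \<or> (v, 0, Down) \<in> orbit (loop_step L) (u, length L, Up)"
  unfolding same_cycle_def orbit_def by (auto simp: image_iff) metis+

lemma cycles_orbit: "cycles n L = {base_vertices n (length L) (orbit (loop_step L) (u, length L, Up)) | u. u \<in> V n}"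
  unfolding cycles_def base_vertices_def same_cycle_orbit by simp

lemma cycle_self: "u \<in> V n \<Longrightarrow> u \<in> base_vertices n (length L) (orbit (loop_step L) (u, length L, Up))"
  by (simp add: base_vertices_def orbit_self)

lemma cycle_eqI:
  assumes "u' \<in> V n" "u \<in> base_vertices n (length L) (orbit (loop_step L) (u', length L, Up))"
  shows "base_vertices n (length L) (orbit (loop_step L) (u, length L, Up)) = base_vertices n (length L) (orbit (loop_step L) (u', length L, Up))"
proof -
  let ?O = "orbit (loop_step L) (u', length L, Up)"
  have u': "(u', length L, Up) \<in> states n (length L)" using assms by (simp add: states_def)
  have "(u, length L, Up) \<in> ?O \<or> (u, 0, Down) \<in> ?O" using assms by (simp add: base_vertices_def)
  then show ?thesis
  proof
    assume "(u, length L, Up) \<in> ?O"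
    then show ?thesis using orbit_eq[OF u'] by simp
  next
    assume "(u, 0, Down) \<in> ?O"
    then have "(u, length L, Down) \<in> ?O" using orbit_step by fastforce
    then have "rev_state (u, length L, Down) \<in> orbit (loop_step L) (rev_state (u', length L, Up))"
      using orbit_rev_state[OF u'] by blast
    then have "orbit (loop_step L) (u, length L, Up) = orbit (loop_step L) (rev_state (u', length L, Up))"
      using orbit_eq[OF rev_state_in_states[OF u']] by simp
    then show ?thesis using base_vertices_orbit_rev_state[OF u'] by simp
  qed
qed

end

text \<open>Identifies the states of \<open>ws\<close> padded by a dummy top link with those of \<open>ws\<close>, so that each step of
  the padded loop map is matched by zero or one steps of the original one (\<open>collapse_loop_step\<close>).\<close>

definition collapse :: "nat \<Rightarrow> nat \<times> nat \<times> dir \<Rightarrow> nat \<times> nat \<times> dir" where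
  "collapse s x = (case x of (v,j,d) \<Rightarrow> if j = Suc s then (if d = Up then (v,s,Up) else (v,0,Down)) else x)"

lemma collapse_id: "x \<in> states n s \<Longrightarrow> collapse s x = x"
  by (cases x) (auto simp: collapse_def states_def)

lemma valid_links_append: "valid_links n ws \<Longrightarrow> (fst l \<in> E n \<or> fst l = {}) \<Longrightarrow> valid_links n (ws @ [l])"
  by (auto simp: valid_links_def)

locale link_history =
  fixes n :: nat and ws :: "link list"
  assumes valid_ws: "valid_links n ws"
begin

abbreviation "ws0 \<equiv> ws @ [({}, Cross)]"

sublocale Old: link_seq n ws by unfold_locales (rule valid_ws)
sublocale Pad: link_seq n ws0 by unfold_locales (rule valid_links_append[OF valid_ws], simp)
sublocale Pad0: finite_injection "states n (Suc (length ws))" "loop_step ws0"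
  using Pad.finite_injection_axioms by simp

lemma collapse_loop_step:
  assumes "x \<in> states n (Suc (length ws))"
  shows "collapse (length ws) (loop_step ws0 x) = loop_step ws (collapse (length ws) x) \<or>
    (collapse (length ws) (loop_step ws0 x) = collapse (length ws) x \<and>
     collapse (length ws) (loop_step ws0 (loop_step ws0 x)) = loop_step ws (collapse (length ws) x))"
proof -
  let ?s = "length ws"
  have "x \<in> states n (length ws0)" using assms by simp
  then show ?thesis
  proof (cases rule: Pad.states_cases)
    case (up v j e m)
    show ?thesis
    proof (cases "j = ?s")
      case False
      then have jl: "j < ?s" using up(3) by simp
      have "loop_step ws0 x = loop_step ws x" using up jl by (simp add: nth_append)
      moreover have xin: "x \<in> states n ?s" using up jl by (simp add: states_def)
      ultimately show ?thesis using collapse_id[OF Old.loop_step_in_states[OF xin]] collapse_id[OF xin] by simp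
    qed (use up in \<open>simp add: collapse_def nth_append\<close>)
  next
    case (down v j e m)
    show ?thesis
    proof (cases "j = ?s")
      case False
      then have jl: "j < ?s" using down(3) by simp
      have "loop_step ws0 x = loop_step ws x" using down jl by (simp add: nth_append)
      moreover have xin: "x \<in> states n ?s" using down jl by (simp add: states_def)
      ultimately show ?thesis using collapse_id[OF Old.loop_step_in_states[OF xin]] collapse_id[OF xin] by simp
    qed (use down in \<open>simp add: collapse_def nth_append\<close>)
  qed (simp_all add: collapse_def nth_append)
qed

lemma collapse_orbit:
  assumes "x \<in> states n (Suc (length ws))"
  shows "collapse (length ws) ((loop_step ws0 ^^ t) x) \<in> orbit (loop_step ws) (collapse (length ws) x)"
proof (induction t)
  case 0 then show ?case by (simp add: orbit_self)
next
  case (Suc t)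
  have xin: "(loop_step ws0 ^^ t) x \<in> states n (Suc (length ws))" using Pad.funpow_in assms by simp
  from collapse_loop_step[OF xin] Suc.IH orbit_step show ?case by fastforce
qed

lemma collapse_orbit_reach:
  assumes "x \<in> states n (Suc (length ws))"
  shows "\<exists>t'. collapse (length ws) ((loop_step ws0 ^^ t') x) = (loop_step ws ^^ t) (collapse (length ws) x)"
proof (induction t)
  case 0 then show ?case by (metis funpow_0)
next
  case (Suc t)
  then obtain t' where t': "collapse (length ws) ((loop_step ws0 ^^ t') x) = (loop_step ws ^^ t) (collapse (length ws) x)" by blast
  have xin: "(loop_step ws0 ^^ t') x \<in> states n (Suc (length ws))" using Pad.funpow_in assms by simp
  from collapse_loop_step[OF xin] show ?case
  proof
    assume "collapse (length ws) (loop_step ws0 ((loop_step ws0 ^^ t') x)) = loop_step ws (collapse (length ws) ((loop_step ws0 ^^ t') x))"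
    then have "collapse (length ws) ((loop_step ws0 ^^ Suc t') x) = (loop_step ws ^^ Suc t) (collapse (length ws) x)"
      using t' by simp
    then show ?thesis by blast
  next
    assume "collapse (length ws) (loop_step ws0 ((loop_step ws0 ^^ t') x)) = collapse (length ws) ((loop_step ws0 ^^ t') x) \<and>
     collapse (length ws) (loop_step ws0 (loop_step ws0 ((loop_step ws0 ^^ t') x))) = loop_step ws (collapse (length ws) ((loop_step ws0 ^^ t') x))"
    then have "collapse (length ws) ((loop_step ws0 ^^ Suc (Suc t')) x) = (loop_step ws ^^ Suc t) (collapse (length ws) x)"
      using t' by simp
    then show ?thesis by blast
  qed
qed

lemma pad_orbit_base_of_collapse:
  assumes x: "x \<in> states n (Suc (length ws))" and wo: "w \<in> orbit (loop_step ws0) x"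
    and w: "collapse (length ws) w \<in> {(v, length ws, Up), (v, 0, Down)}"
  shows "(v, Suc (length ws), Up) \<in> orbit (loop_step ws0) x \<or> (v, 0, Down) \<in> orbit (loop_step ws0) x"
proof -
  let ?s = "length ws"
  have win: "w \<in> states n (Suc ?s)" using Pad0.orbit_subset[OF x] wo by blast
  obtain v' j d where w': "w = (v', j, d)" by (cases w)
  consider "w = (v, ?s, Up)" | "w = (v, Suc ?s, Up)" | "w = (v, 0, Down)" | "w = (v, Suc ?s, Down)"
    using w w' by (cases d) (auto simp: collapse_def split: if_splits)
  then show ?thesis
  proof cases
    case 1
    then have "loop_step ws0 w = (v, Suc ?s, Up)" by simp
    then show ?thesis using orbit_step[OF wo] by metis
  next
    case 4
    then have din: "(v, 0, Down) \<in> states n (Suc ?s)" using win by (simp add: states_def)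
    have "loop_step ws0 (v, 0, Down) = w" using 4 by simp
    then have "w \<in> orbit (loop_step ws0) (v, 0, Down)" using orbit_step[OF orbit_self] by metis
    then have "(v, 0, Down) \<in> orbit (loop_step ws0) w" using Pad0.orbit_sym[OF din] by blast
    then show ?thesis using orbit_trans[OF wo] by blast
  qed (use wo in simp_all)
qed

lemma same_cycle_pad:
  assumes "u \<in> V n"
  shows "same_cycle ws0 u v \<longleftrightarrow> same_cycle ws u v"
proof -
  let ?s = "length ws"
  let ?x = "(u, Suc ?s, Up)"
  have xin: "?x \<in> states n (Suc ?s)" using assms by (simp add: states_def)
  have px: "collapse ?s ?x = (u, ?s, Up)" by (simp add: collapse_def)
  show ?thesis
  proof
    assume "same_cycle ws0 u v"
    then obtain t where "(loop_step ws0 ^^ t) ?x \<in> {(v, Suc ?s, Up), (v, 0, Down)}"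
      unfolding same_cycle_def by auto
    then have "collapse ?s ((loop_step ws0 ^^ t) ?x) \<in> {(v, ?s, Up), (v, 0, Down)}"
      by (auto simp: collapse_def)
    moreover have "collapse ?s ((loop_step ws0 ^^ t) ?x) \<in> orbit (loop_step ws) (u, ?s, Up)"
      using collapse_orbit[OF xin, of t] px by simp
    ultimately show "same_cycle ws u v" unfolding same_cycle_def orbit_def by auto
  next
    assume "same_cycle ws u v"
    then obtain t where t: "(loop_step ws ^^ t) (u, ?s, Up) \<in> {(v, ?s, Up), (v, 0, Down)}"
      unfolding same_cycle_def by auto
    obtain t' where "collapse ?s ((loop_step ws0 ^^ t') ?x) = (loop_step ws ^^ t) (u, ?s, Up)"
      using collapse_orbit_reach[OF xin, of t] px by auto
    then have "collapse ?s ((loop_step ws0 ^^ t') ?x) \<in> {(v, ?s, Up), (v, 0, Down)}" using t by simp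
    then have "(v, Suc ?s, Up) \<in> orbit (loop_step ws0) ?x \<or> (v, 0, Down) \<in> orbit (loop_step ws0) ?x"
      by (rule pad_orbit_base_of_collapse[OF xin orbit_funpow])
    then show "same_cycle ws0 u v" unfolding same_cycle_def orbit_def by auto
  qed
qed

lemma cycles_pad: "cycles n ws0 = cycles n ws"
proof -
  have *: "\<forall>u\<in>V n. {v \<in> V n. same_cycle ws0 u v} = {v \<in> V n. same_cycle ws u v}"
    using same_cycle_pad by auto
  show ?thesis unfolding cycles_def using * by blast
qed

text \<open>The loop leaving \<open>a\<close> upwards through height 0 first reaches \<open>b\<close> after \<open>hit_time a b\<close> steps, having
  visited \<open>position a b\<close> vertices so far (\<open>a\<close> included); \<open>loop_length a\<close> is the size of the cycle of \<open>a\<close>.\<close>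

definition hit_time :: "nat \<Rightarrow> nat \<Rightarrow> nat" where
  "hit_time a b = (LEAST t. (loop_step ws0 ^^ t) (a, Suc (length ws), Up) \<in> {(b, Suc (length ws), Up), (b, 0, Down)})"

definition position :: "nat \<Rightarrow> nat \<Rightarrow> nat" where
  "position a b = card (base_vertices n (Suc (length ws)) ((\<lambda>i. (loop_step ws0 ^^ i) (a, Suc (length ws), Up)) ` {..<hit_time a b}))"

definition loop_length :: "nat \<Rightarrow> nat" where
  "loop_length a = card (base_vertices n (Suc (length ws)) (orbit (loop_step ws0) (a, Suc (length ws), Up)))"

lemma pad_orbit_not_both_base: "x \<in> states n (Suc (length ws)) \<Longrightarrow>
   \<not> ((v, Suc (length ws), Up) \<in> orbit (loop_step ws0) x \<and> (v, 0, Down) \<in> orbit (loop_step ws0) x)"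
  using Pad.orbit_not_both_base[of x v] by simp

lemma finite_base_vertices: "finite (base_vertices n N A)"
  by (rule finite_subset[of _ "V n"]) (auto simp: base_vertices_def V_def)

lemma base_vertices_orbit_diff:
  assumes x: "x \<in> states n (Suc (length ws))" and A: "A \<subseteq> orbit (loop_step ws0) x"
  shows "base_vertices n (Suc (length ws)) (orbit (loop_step ws0) x - A)
    = base_vertices n (Suc (length ws)) (orbit (loop_step ws0) x) - base_vertices n (Suc (length ws)) A"
proof
  show "base_vertices n (Suc (length ws)) (orbit (loop_step ws0) x - A)
      \<subseteq> base_vertices n (Suc (length ws)) (orbit (loop_step ws0) x) - base_vertices n (Suc (length ws)) A"
  proof
    fix v assume v: "v \<in> base_vertices n (Suc (length ws)) (orbit (loop_step ws0) x - A)"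
    have ne: "\<not> ((v, Suc (length ws), Up) \<in> orbit (loop_step ws0) x \<and> (v, 0, Down) \<in> orbit (loop_step ws0) x)"
      by (rule pad_orbit_not_both_base[OF x])
    show "v \<in> base_vertices n (Suc (length ws)) (orbit (loop_step ws0) x) - base_vertices n (Suc (length ws)) A"
      using v ne A unfolding base_vertices_def by blast
  qed
qed (auto simp: base_vertices_def)

lemma hit_time_spec:
  assumes a: "a \<in> V n" and b: "b \<in> base_vertices n (Suc (length ws)) (orbit (loop_step ws0) (a, Suc (length ws), Up))" and ab: "a \<noteq> b"
  shows "(loop_step ws0 ^^ hit_time a b) (a, Suc (length ws), Up) \<in> {(b, Suc (length ws), Up), (b, 0, Down)}"
    "\<And>i. i < hit_time a b \<Longrightarrow> (loop_step ws0 ^^ i) (a, Suc (length ws), Up) \<notin> {(b, Suc (length ws), Up), (b, 0, Down)}"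
    "0 < hit_time a b"
proof -
  let ?P = "\<lambda>t. (loop_step ws0 ^^ t) (a, Suc (length ws), Up) \<in> {(b, Suc (length ws), Up), (b, 0, Down)}"
  have "\<exists>t. ?P t" using b unfolding base_vertices_def orbit_def by auto
  then show P: "?P (hit_time a b)" unfolding hit_time_def by (rule LeastI_ex)
  show "\<And>i. i < hit_time a b \<Longrightarrow> \<not> ?P i" unfolding hit_time_def by (rule not_less_Least)
  show "0 < hit_time a b"
  proof (rule ccontr)
    assume "\<not> 0 < hit_time a b"
    then have "hit_time a b = 0" by simp
    then show False using P ab by simp
  qed
qed

lemma position_bounds:
  assumes a: "a \<in> V n" and b: "b \<in> base_vertices n (Suc (length ws)) (orbit (loop_step ws0) (a, Suc (length ws), Up))" and ab: "a \<noteq> b"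
  shows "1 \<le> position a b" "position a b < loop_length a"
    "b \<notin> base_vertices n (Suc (length ws)) ((\<lambda>i. (loop_step ws0 ^^ i) (a, Suc (length ws), Up)) ` {..<hit_time a b})"
proof -
  let ?I = "base_vertices n (Suc (length ws)) ((\<lambda>i. (loop_step ws0 ^^ i) (a, Suc (length ws), Up)) ` {..<hit_time a b})"
  let ?O = "base_vertices n (Suc (length ws)) (orbit (loop_step ws0) (a, Suc (length ws), Up))"
  have t0: "0 < hit_time a b" by (rule hit_time_spec(3)[OF a b ab])
  have "a \<in> ?I" using a t0 unfolding base_vertices_def by (auto intro!: image_eqI[of _ _ 0])
  then show "1 \<le> position a b" unfolding position_def using finite_base_vertices by (metis One_nat_def Suc_leI card_gt_0_iff empty_iff)
  show bn: "b \<notin> ?I"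
  proof
    assume "b \<in> ?I"
    then obtain i where "i < hit_time a b" "(loop_step ws0 ^^ i) (a, Suc (length ws), Up) \<in> {(b, Suc (length ws), Up), (b, 0, Down)}"
      unfolding base_vertices_def by auto
    then show False using hit_time_spec(2)[OF a b ab] by blast
  qed
  have "?I \<subseteq> ?O" unfolding base_vertices_def orbit_def by auto
  then have "?I \<subseteq> ?O - {b}" using bn by auto
  moreover have "?O - {b} \<subset> ?O" using b by auto
  ultimately have "?I \<subset> ?O" by blast
  then show "position a b < loop_length a" unfolding position_def loop_length_def using finite_base_vertices psubset_card_mono by blast
qed

lemma inj_on_position:
  assumes a: "a \<in> V n"
  shows "inj_on (position a) (base_vertices n (Suc (length ws)) (orbit (loop_step ws0) (a, Suc (length ws), Up)) - {a})"
proof -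
  let ?O = "base_vertices n (Suc (length ws)) (orbit (loop_step ws0) (a, Suc (length ws), Up))"
  let ?I = "\<lambda>b. base_vertices n (Suc (length ws)) ((\<lambda>i. (loop_step ws0 ^^ i) (a, Suc (length ws), Up)) ` {..<hit_time a b})"
  have lt: "position a b < position a b'" if "b \<in> ?O - {a}" "b' \<in> ?O - {a}" "hit_time a b < hit_time a b'" for b b'
  proof -
    have "?I b \<subseteq> ?I b'" using that(3) unfolding base_vertices_def by auto
    moreover have "b \<in> ?I b'"
    proof -
      have q: "(loop_step ws0 ^^ hit_time a b) (a, Suc (length ws), Up) \<in> {(b, Suc (length ws), Up), (b, 0, Down)}"
        using hit_time_spec(1)[of a b] that a by auto
      have im: "(loop_step ws0 ^^ hit_time a b) (a, Suc (length ws), Up) \<in> (\<lambda>i. (loop_step ws0 ^^ i) (a, Suc (length ws), Up)) ` {..<hit_time a b'}"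
        using that(3) by simp
      have "b \<in> V n" using that(1) unfolding base_vertices_def by simp
      then show ?thesis using q im unfolding base_vertices_def by auto
    qed
    moreover have "b \<notin> ?I b" using position_bounds(3)[of a b] that a by auto
    ultimately have "?I b \<subset> ?I b'" by blast
    then show ?thesis unfolding position_def using finite_base_vertices psubset_card_mono by blast
  qed
  show ?thesis
  proof (rule inj_onI)
    fix b b' assume bb: "b \<in> ?O - {a}" "b' \<in> ?O - {a}" "position a b = position a b'"
    show "b = b'"
    proof (cases "hit_time a b" "hit_time a b'" rule: linorder_cases)
      case less then show ?thesis using lt[OF bb(1,2)] bb(3) by simp
    next
      case greater then show ?thesis using lt[OF bb(2,1)] bb(3) by simp
    next
      case equal
      have "(loop_step ws0 ^^ hit_time a b) (a, Suc (length ws), Up) \<in> {(b, Suc (length ws), Up), (b, 0, Down)}"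
        using hit_time_spec(1)[of a b] bb a by auto
      moreover have "(loop_step ws0 ^^ hit_time a b) (a, Suc (length ws), Up) \<in> {(b', Suc (length ws), Up), (b', 0, Down)}"
        using hit_time_spec(1)[of a b'] bb a equal by auto
      ultimately show ?thesis by auto
    qed
  qed
qed

end

definition bad_positions :: "mark \<Rightarrow> nat \<Rightarrow> nat \<Rightarrow> nat set" where
  "bad_positions m ell k = (case m of
     Cross \<Rightarrow> {p. 1 \<le> p \<and> p < ell \<and> (p \<le> k \<or> ell - p \<le> k)}
   | Bar \<Rightarrow> {p. 1 \<le> p \<and> p < ell \<and> (p + 1 \<le> k \<or> (1 \<le> ell - (p + 1) \<and> ell - (p + 1) \<le> k))})"

lemma card_bad_positions: "card (bad_positions m ell k) \<le> 2 * k"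
proof (cases m)
  case Cross
  have "bad_positions m ell k \<subseteq> {1..k} \<union> {ell - k..<ell}" unfolding bad_positions_def Cross by auto
  then have "card (bad_positions m ell k) \<le> card ({1..k} \<union> {ell - k..<ell})" by (intro card_mono) auto
  also have "\<dots> \<le> card {1..k} + card {ell - k..<ell}" by (rule card_Un_le)
  also have "\<dots> \<le> 2 * k" by simp
  finally show ?thesis .
next
  case Bar
  have "bad_positions m ell k \<subseteq> {1..<k} \<union> {ell - 1 - k..<ell - 1}" unfolding bad_positions_def Bar by auto
  then have "card (bad_positions m ell k) \<le> card ({1..<k} \<union> {ell - 1 - k..<ell - 1})" by (intro card_mono) auto
  also have "\<dots> \<le> card {1..<k} + card {ell - 1 - k..<ell - 1}" by (rule card_Un_le)
  also have "\<dots> \<le> 2 * k" by simp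
  finally show ?thesis .
qed

locale new_link = link_history +
  fixes a b :: nat and m :: mark
  assumes aV: "a \<in> V n" and bV: "b \<in> V n" and ab: "a \<noteq> b"
begin

abbreviation "ws1 \<equiv> ws @ [({a, b}, m)]"

text \<open>With \<open>s = length ws\<close>: \<open>z1\<close>, \<open>z2\<close> are the states entering the new link from below at \<open>a\<close>, \<open>b\<close>,
  \<open>z3\<close>, \<open>z4\<close> those entering it from above, and \<open>Ua\<close>, \<open>Ub\<close>, \<open>Db\<close> the states just before passing
  height 0 upwards at \<open>a\<close>, \<open>b\<close> and downwards at \<open>b\<close>; all refer to the padded history \<open>ws0\<close>.\<close>

abbreviation "S0 \<equiv> states n (Suc (length ws))"
abbreviation "z1 \<equiv> (a, length ws, Up)"
abbreviation "z2 \<equiv> (b, length ws, Up)"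
abbreviation "z3 \<equiv> (a, Suc (length ws), Down)"
abbreviation "z4 \<equiv> (b, Suc (length ws), Down)"
abbreviation "Ua \<equiv> (a, Suc (length ws), Up)"
abbreviation "Ub \<equiv> (b, Suc (length ws), Up)"
abbreviation "Db \<equiv> (b, 0::nat, Down)"

text \<open>The new link only redirects the four states entering it, so the loop map of \<open>ws1\<close> is that of
  \<open>ws0\<close> precomposed with two transpositions (\<open>loop_step_new\<close>).\<close>

definition link_perm :: "nat \<times> nat \<times> dir \<Rightarrow> nat \<times> nat \<times> dir" where
  "link_perm = (case m of Cross \<Rightarrow> transpose z1 z2 \<circ> transpose z3 z4 | Bar \<Rightarrow> transpose z1 z4 \<circ> transpose z2 z3)"

sublocale New: link_seq n ws1 by (unfold_locales) (rule valid_links_append[OF valid_ws], simp add: pair_in_E aV bV ab)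

lemma other_ab: "other {a,b} a = b" "other {a,b} b = a"
  using other_pair[OF ab] other_pair[of b a] ab by (auto simp: insert_commute)

lemma loop_step_new_eq_pad:
  assumes "x \<in> S0" "x \<notin> {z1, z2, z3, z4}"
  shows "loop_step ws1 x = loop_step ws0 x"
proof -
  have "x \<in> states n (length ws0)" using assms(1) by simp
  then show ?thesis
  proof (cases rule: Pad.states_cases)
    case (up v j e m')
    then show ?thesis using assms(2) by (cases "j = length ws") (auto simp: nth_append)
  next
    case (down v j e m')
    then show ?thesis using assms(2) by (cases "j = length ws") (auto simp: nth_append)
  qed simp_all
qed

lemma link_perm_Cross: "m = Cross \<Longrightarrow> link_perm z1 = z2 \<and> link_perm z2 = z1 \<and> link_perm z3 = z4 \<and> link_perm z4 = z3"
  unfolding link_perm_def using ab by (simp add: transpose_def)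

lemma link_perm_Bar: "m = Bar \<Longrightarrow> link_perm z1 = z4 \<and> link_perm z4 = z1 \<and> link_perm z2 = z3 \<and> link_perm z3 = z2"
  unfolding link_perm_def using ab by (simp add: transpose_def)

lemma loop_step_pad_at: "loop_step ws0 z1 = Ua" "loop_step ws0 z2 = Ub" "loop_step ws0 z3 = (a, length ws, Down)"
  "loop_step ws0 z4 = (b, length ws, Down)" "loop_step ws0 Db = z4"
  by (simp_all add: nth_append)

lemma loop_step_new_Cross: assumes "m = Cross"
  shows "loop_step ws1 z1 = Ub" "loop_step ws1 z2 = Ua" "loop_step ws1 z3 = (b, length ws, Down)"
    "loop_step ws1 z4 = (a, length ws, Down)"
  using assms other_ab by (simp_all add: nth_append)

lemma loop_step_new_Bar: assumes "m = Bar"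
  shows "loop_step ws1 z1 = (b, length ws, Down)" "loop_step ws1 z2 = (a, length ws, Down)"
    "loop_step ws1 z3 = Ub" "loop_step ws1 z4 = Ua"
  using assms other_ab by (simp_all add: nth_append)

lemma link_perm_other: "x \<noteq> z1 \<Longrightarrow> x \<noteq> z2 \<Longrightarrow> x \<noteq> z3 \<Longrightarrow> x \<noteq> z4 \<Longrightarrow> link_perm x = x"
  unfolding link_perm_def by (cases m) (auto simp: transpose_def)

lemma loop_step_new:
  assumes "x \<in> S0"
  shows "loop_step ws1 x = loop_step ws0 (link_perm x)"
proof (cases "x \<in> {z1, z2, z3, z4}")
  case True
  then show ?thesis
    using link_perm_Cross link_perm_Bar loop_step_new_Cross loop_step_new_Bar loop_step_pad_at
    by (cases m) auto
next
  case False
  then show ?thesis using loop_step_new_eq_pad[OF assms False] link_perm_other by auto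
qed

lemma loop_step_new_in: "x \<in> S0 \<Longrightarrow> loop_step ws1 x \<in> S0"
  using New.loop_step_in_states[of x] by simp

lemma orbit_new: assumes "x \<in> S0" shows "orbit (loop_step ws1) x = orbit (loop_step ws0 \<circ> link_perm) x"
  by (rule orbit_cong[where X=S0]) (use loop_step_new loop_step_new_in assms in auto)

text \<open>\<open>Oa\<close>, \<open>Ob\<close> are the loops of \<open>ws0\<close> leaving the new link upwards at \<open>a\<close>, \<open>b\<close> and \<open>Ra\<close>, \<open>Rb\<close> their
  reversals. A cycle can only shrink if \<open>b\<close> lies on \<open>Oa\<close>, i.e. \<open>Ob = Oa\<close> or \<open>Rb = Oa\<close>.\<close>

abbreviation "Oa \<equiv> orbit (loop_step ws0) Ua"
abbreviation "Ra \<equiv> orbit (loop_step ws0) z3"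
abbreviation "Ob \<equiv> orbit (loop_step ws0) Ub"
abbreviation "Rb \<equiv> orbit (loop_step ws0) z4"

lemma in_S0: "z1 \<in> S0" "z2 \<in> S0" "z3 \<in> S0" "z4 \<in> S0" "Ua \<in> S0" "Ub \<in> S0" "Db \<in> S0"
  using aV bV by (auto simp: states_def)

lemma pad_rev_notin_orbit: "x \<in> S0 \<Longrightarrow> rev_state x \<notin> orbit (loop_step ws0) x"
  using Pad.rev_state_notin_orbit[of x] by simp
lemma pad_orbit_rev_state: "x \<in> S0 \<Longrightarrow> orbit (loop_step ws0) (rev_state x) = rev_state ` orbit (loop_step ws0) x"
  using Pad.orbit_rev_state[of x] by simp
lemma new_rev_notin_orbit: "x \<in> S0 \<Longrightarrow> rev_state x \<notin> orbit (loop_step ws1) x"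
  using New.rev_state_notin_orbit[of x] by simp
lemma new_base_vertices_rev: "x \<in> S0 \<Longrightarrow> base_vertices n (Suc (length ws)) (orbit (loop_step ws1) (rev_state x))
    = base_vertices n (Suc (length ws)) (orbit (loop_step ws1) x)"
  using New.base_vertices_orbit_rev_state[of x] by simp

lemma pad_mem_orbit_iff: assumes "x \<in> S0" "y \<in> S0"
  shows "y \<in> orbit (loop_step ws0) x \<longleftrightarrow> orbit (loop_step ws0) y = orbit (loop_step ws0) x"
proof
  assume "y \<in> orbit (loop_step ws0) x"
  then show "orbit (loop_step ws0) y = orbit (loop_step ws0) x" by (rule Pad0.orbit_eq[OF assms(1)])
next
  assume "orbit (loop_step ws0) y = orbit (loop_step ws0) x"
  then show "y \<in> orbit (loop_step ws0) x" using orbit_self[of y "loop_step ws0"] by simp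
qed

lemma pad_orbit_rev_state_neq: "x \<in> S0 \<Longrightarrow> orbit (loop_step ws0) (rev_state x) \<noteq> orbit (loop_step ws0) x"
proof
  assume "x \<in> S0" "orbit (loop_step ws0) (rev_state x) = orbit (loop_step ws0) x"
  then show False using pad_rev_notin_orbit[of x] orbit_self[of "rev_state x" "loop_step ws0"] by simp
qed

lemma orbit_z1: "orbit (loop_step ws0) z1 = Oa"
proof -
  have "Ua \<in> orbit (loop_step ws0) z1" using orbit_step[OF orbit_self, of "loop_step ws0" z1] loop_step_pad_at(1) by simp
  then show ?thesis using Pad0.orbit_eq[OF in_S0(1)] by simp
qed

lemma orbit_z2: "orbit (loop_step ws0) z2 = Ob"
proof -
  have "Ub \<in> orbit (loop_step ws0) z2" using orbit_step[OF orbit_self, of "loop_step ws0" z2] loop_step_pad_at(2) by simp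
  then show ?thesis using Pad0.orbit_eq[OF in_S0(2)] by simp
qed

lemma orbit_Db: "orbit (loop_step ws0) Db = Rb"
proof -
  have "z4 \<in> orbit (loop_step ws0) Db" using orbit_step[OF orbit_self, of "loop_step ws0" Db] loop_step_pad_at(5) by simp
  then show ?thesis using Pad0.orbit_eq[OF in_S0(7)] by simp
qed

lemma Ra_eq: "Ra = rev_state ` Oa" using pad_orbit_rev_state[OF in_S0(5)] by simp
lemma Rb_eq: "Rb = rev_state ` Ob" using pad_orbit_rev_state[OF in_S0(6)] by simp
lemma Ra_neq_Oa: "Ra \<noteq> Oa" using pad_orbit_rev_state_neq[OF in_S0(5)] by simp
lemma Rb_neq_Ob: "Rb \<noteq> Ob" using pad_orbit_rev_state_neq[OF in_S0(6)] by simp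

lemma Rb_eq_Ra: "Ob = Oa \<Longrightarrow> Rb = Ra" using Ra_eq Rb_eq by simp
lemma Ob_eq_Ra: "Rb = Oa \<Longrightarrow> Ob = Ra"
  using Ra_eq Rb_eq rev_state_image_image by metis

lemma Ub_in_Oa_iff: "Ub \<in> Oa \<longleftrightarrow> Ob = Oa" using pad_mem_orbit_iff[OF in_S0(5) in_S0(6)] by simp
lemma Db_in_Oa_iff: "Db \<in> Oa \<longleftrightarrow> Rb = Oa" using pad_mem_orbit_iff[OF in_S0(5) in_S0(7)] orbit_Db by simp

abbreviation "old_cycle u \<equiv> base_vertices n (Suc (length ws)) (orbit (loop_step ws0) (u, Suc (length ws), Up))"
abbreviation "new_cycle u \<equiv> base_vertices n (Suc (length ws)) (orbit (loop_step ws1) (u, Suc (length ws), Up))"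

lemma loop_step_link_perm_Cross: "m = Cross \<Longrightarrow> loop_step ws0 \<circ> link_perm = (loop_step ws0 \<circ> transpose z1 z2) \<circ> transpose z3 z4"
  unfolding link_perm_def by (simp add: comp_assoc)
lemma loop_step_link_perm_Bar: "m = Bar \<Longrightarrow> loop_step ws0 \<circ> link_perm = (loop_step ws0 \<circ> transpose z1 z4) \<circ> transpose z2 z3"
  unfolding link_perm_def by (simp add: comp_assoc)

lemma top_state_in_states: "u \<in> V n \<Longrightarrow> (u, Suc (length ws), Up) \<in> S0"
  by (simp add: states_def)

lemma old_cycle_subset_merge:
  assumes "Ob \<noteq> Oa" "Rb \<noteq> Oa" "u \<in> V n"
  shows "old_cycle u \<subseteq> new_cycle u"
proof -
  have n1: "Rb \<noteq> Ra" using assms(1) Ra_eq Rb_eq rev_state_image_inj by metis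
  have n2: "Ob \<noteq> Ra" using assms(2) Ra_eq Rb_eq rev_state_image_image by metis
  have w: "(u, Suc (length ws), Up) \<in> S0" using top_state_in_states assms(3) .
  have "orbit (loop_step ws0) (u, Suc (length ws), Up) \<subseteq> orbit (loop_step ws0 \<circ> link_perm) (u, Suc (length ws), Up)"
  proof (cases m)
    case Cross
    have "orbit (loop_step ws0) (u, Suc (length ws), Up) \<subseteq> orbit ((loop_step ws0 \<circ> transpose z1 z2) \<circ> transpose z3 z4) (u, Suc (length ws), Up)"
    proof (rule Pad0.orbit_double_merge[OF in_S0(1,2,3,4)])
      show "z2 \<notin> orbit (loop_step ws0) z1" using pad_mem_orbit_iff[OF in_S0(1,2)] orbit_z1 orbit_z2 assms by simp
      show "z4 \<notin> orbit (loop_step ws0) z3" using pad_mem_orbit_iff[OF in_S0(3,4)] n1 by simp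
      show "z3 \<notin> orbit (loop_step ws0) z1 \<union> orbit (loop_step ws0) z2"
        using pad_mem_orbit_iff[OF in_S0(1,3)] pad_mem_orbit_iff[OF in_S0(2,3)] orbit_z1 orbit_z2 Ra_neq_Oa n2 by auto
      show "z4 \<notin> orbit (loop_step ws0) z1 \<union> orbit (loop_step ws0) z2"
        using pad_mem_orbit_iff[OF in_S0(1,4)] pad_mem_orbit_iff[OF in_S0(2,4)] orbit_z1 orbit_z2 assms Rb_neq_Ob by auto
    qed (rule w)
    then show ?thesis using loop_step_link_perm_Cross[OF Cross] by simp
  next
    case Bar
    have "orbit (loop_step ws0) (u, Suc (length ws), Up) \<subseteq> orbit ((loop_step ws0 \<circ> transpose z1 z4) \<circ> transpose z2 z3) (u, Suc (length ws), Up)"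
    proof (rule Pad0.orbit_double_merge[OF in_S0(1,4,2,3)])
      show "z4 \<notin> orbit (loop_step ws0) z1" using pad_mem_orbit_iff[OF in_S0(1,4)] orbit_z1 assms by simp
      show "z3 \<notin> orbit (loop_step ws0) z2" using pad_mem_orbit_iff[OF in_S0(2,3)] orbit_z2 n2 by simp
      show "z2 \<notin> orbit (loop_step ws0) z1 \<union> orbit (loop_step ws0) z4"
        using pad_mem_orbit_iff[OF in_S0(1,2)] pad_mem_orbit_iff[OF in_S0(4,2)] orbit_z1 orbit_z2 assms Rb_neq_Ob by auto
      show "z3 \<notin> orbit (loop_step ws0) z1 \<union> orbit (loop_step ws0) z4"
        using pad_mem_orbit_iff[OF in_S0(1,3)] pad_mem_orbit_iff[OF in_S0(4,3)] orbit_z1 Ra_neq_Oa n1 by auto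
    qed (rule w)
    then show ?thesis using loop_step_link_perm_Bar[OF Bar] by simp
  qed
  then show ?thesis using orbit_new[OF w] base_vertices_mono by metis
qed

text \<open>If the first transposition joins \<open>Oa\<close> to its reversal, the second one cuts the union into two loops
  that are reversals of each other, so the cycle of \<open>a\<close> is only restructured.\<close>

lemma old_cycle_subset_restructure:
  assumes sg: "loop_step ws0 \<circ> link_perm = (loop_step ws0 \<circ> transpose x1 y1) \<circ> transpose x2 y2"
    and x1: "x1 \<in> Oa" and y1: "y1 \<in> Ra" and x2: "x2 \<in> Oa \<union> Ra" and y2: "y2 \<in> Oa \<union> Ra" and ne: "x2 \<noteq> y2"
    and u: "u \<in> V n"
  shows "old_cycle u \<subseteq> new_cycle u"
proof -
  have OX: "Oa \<subseteq> S0" "Ra \<subseteq> S0" using Pad0.orbit_subset in_S0 by auto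
  have x1X: "x1 \<in> S0" and y1X: "y1 \<in> S0" using x1 y1 OX by auto
  have ox1: "orbit (loop_step ws0) x1 = Oa" using Pad0.orbit_eq[OF in_S0(5) x1] .
  have oy1: "orbit (loop_step ws0) y1 = Ra" using Pad0.orbit_eq[OF in_S0(3) y1] .
  have d1: "y1 \<notin> orbit (loop_step ws0) x1" using pad_mem_orbit_iff[OF x1X y1X] ox1 oy1 Ra_neq_Oa by simp
  let ?G = "(loop_step ws0 \<circ> transpose x1 y1) \<circ> transpose x2 y2"
  have M: "\<And>w. w \<in> S0 \<Longrightarrow> w \<notin> Oa \<union> Ra \<Longrightarrow> orbit ?G w = orbit (loop_step ws0) w"
          "orbit ?G x2 \<union> orbit ?G y2 = Oa \<union> Ra"
          "\<And>w. w \<in> Oa \<union> Ra \<Longrightarrow> orbit ?G w = orbit ?G x2 \<or> orbit ?G w = orbit ?G y2"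
    using Pad0.orbit_merge_split[OF x1X y1X d1, of x2 y2] x2 y2 ne ox1 oy1 by simp_all
  have x2X: "x2 \<in> S0" "y2 \<in> S0" using x2 y2 OX by auto
  have oG: "\<And>w. w \<in> S0 \<Longrightarrow> orbit (loop_step ws1) w = orbit ?G w" using orbit_new sg by simp
  have rev_Oa_Ra: "rev_state ` (Oa \<union> Ra) = Oa \<union> Ra"
    unfolding image_Un Ra_eq rev_state_image_image by blast
  have rx2: "rev_state x2 \<in> Oa \<union> Ra" using x2 rev_Oa_Ra by blast
  have "orbit ?G (rev_state x2) \<noteq> orbit ?G x2"
  proof
    assume "orbit ?G (rev_state x2) = orbit ?G x2"
    then have "rev_state x2 \<in> orbit (loop_step ws1) x2" using orbit_self[where x="rev_state x2" and f="?G"] oG[OF x2X(1)] oG[OF rev_state_in_states[OF x2X(1)]] by simp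
    then show False using new_rev_notin_orbit[OF x2X(1)] by simp
  qed
  then have "orbit ?G (rev_state x2) = orbit ?G y2" using M(3)[OF rx2] by blast
  then have VQ: "base_vertices n (Suc (length ws)) (orbit ?G y2) = base_vertices n (Suc (length ws)) (orbit ?G x2)"
    using new_base_vertices_rev[OF x2X(1)] oG[OF x2X(1)] oG[OF rev_state_in_states[OF x2X(1)]] by simp
  have w: "(u, Suc (length ws), Up) \<in> S0" using top_state_in_states u .
  show ?thesis
  proof (cases "(u, Suc (length ws), Up) \<in> Oa \<union> Ra")
    case False
    then show ?thesis using M(1)[OF w False] oG[OF w] by simp
  next
    case True
    have "orbit (loop_step ws0) (u, Suc (length ws), Up) \<subseteq> Oa \<union> Ra"
      using Pad0.orbit_eq_either[OF in_S0(5) in_S0(3) True] by auto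
    then have "old_cycle u \<subseteq> base_vertices n (Suc (length ws)) (Oa \<union> Ra)" by (rule base_vertices_mono)
    also have "\<dots> = base_vertices n (Suc (length ws)) (orbit ?G x2) \<union> base_vertices n (Suc (length ws)) (orbit ?G y2)"
      by (simp only: M(2)[symmetric] base_vertices_Un)
    also have "\<dots> = base_vertices n (Suc (length ws)) (orbit ?G x2)" using VQ by simp
    also have "\<dots> = new_cycle u"
    proof -
      have e: "new_cycle u = base_vertices n (Suc (length ws)) (orbit ?G (u, Suc (length ws), Up))" using oG[OF w] by simp
      from M(3)[OF True] show ?thesis
      proof
        assume "orbit ?G (u, Suc (length ws), Up) = orbit ?G x2" then show ?thesis using e by simp
      next
        assume "orbit ?G (u, Suc (length ws), Up) = orbit ?G y2" then show ?thesis using e VQ by simp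
      qed
    qed
    finally show ?thesis .
  qed
qed

abbreviation "N0 \<equiv> Suc (length ws)"

lemma funpow_z1: "(loop_step ws0 ^^ Suc j) z1 = (loop_step ws0 ^^ j) Ua"
  by (simp only: funpow_Suc_right o_apply loop_step_pad_at(1))

lemma funpow_z1_image: "(\<lambda>j. (loop_step ws0 ^^ j) z1) ` {1..k} = (\<lambda>i. (loop_step ws0 ^^ i) Ua) ` {..<k}"
proof
  show "(\<lambda>j. (loop_step ws0 ^^ j) z1) ` {1..k} \<subseteq> (\<lambda>i. (loop_step ws0 ^^ i) Ua) ` {..<k}"
  proof
    fix y assume "y \<in> (\<lambda>j. (loop_step ws0 ^^ j) z1) ` {1..k}"
    then obtain j where j: "j \<in> {1..k}" "y = (loop_step ws0 ^^ j) z1" by auto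
    then obtain i where i: "j = Suc i" by (cases j) auto
    then show "y \<in> (\<lambda>i. (loop_step ws0 ^^ i) Ua) ` {..<k}" using j funpow_z1[of i] by auto
  qed
  show "(\<lambda>i. (loop_step ws0 ^^ i) Ua) ` {..<k} \<subseteq> (\<lambda>j. (loop_step ws0 ^^ j) z1) ` {1..k}"
  proof
    fix y assume "y \<in> (\<lambda>i. (loop_step ws0 ^^ i) Ua) ` {..<k}"
    then obtain i where i: "i < k" "y = (loop_step ws0 ^^ i) Ua" by auto
    then show "y \<in> (\<lambda>j. (loop_step ws0 ^^ j) z1) ` {1..k}"
      using funpow_z1[of i] by (intro image_eqI[of _ _ "Suc i"]) auto
  qed
qed

lemma z1_in_Oa: "z1 \<in> Oa" using orbit_z1 orbit_self[of z1 "loop_step ws0"] by simp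

lemma new_cycle_split:
  assumes sg: "loop_step ws0 \<circ> link_perm = (loop_step ws0 \<circ> transpose z1 y1) \<circ> transpose x2 y2"
    and y1: "y1 \<in> Oa" "y1 \<noteq> z1" and x2: "x2 \<in> Ra" and y2: "y2 \<in> Ra"
    and u: "u \<in> V n" and nsub: "\<not> old_cycle u \<subseteq> new_cycle u"
  shows "new_cycle u = base_vertices n N0 (orbit (loop_step ws0 \<circ> transpose z1 y1) z1)
    \<or> new_cycle u = base_vertices n N0 (orbit (loop_step ws0 \<circ> transpose z1 y1) y1)"
proof -
  have y1o: "y1 \<in> orbit (loop_step ws0) z1" using y1 orbit_z1 by simp
  have x2X: "x2 \<in> S0" using x2 Pad0.orbit_subset in_S0(3) by blast
  have ox2: "orbit (loop_step ws0) x2 = Ra" using Pad0.orbit_eq[OF in_S0(3) x2] .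
  have y2o: "y2 \<in> orbit (loop_step ws0) x2" using ox2 y2 by simp
  have d: "x2 \<notin> orbit (loop_step ws0) z1"
  proof
    assume "x2 \<in> orbit (loop_step ws0) z1"
    then have "orbit (loop_step ws0) x2 = Oa" using Pad0.orbit_eq[OF in_S0(1)] orbit_z1 by simp
    then show False using ox2 Ra_neq_Oa by simp
  qed
  let ?H = "loop_step ws0 \<circ> transpose z1 y1"
  let ?G = "?H \<circ> transpose x2 y2"
  have SS1: "\<And>w. w \<in> S0 \<Longrightarrow> w \<notin> Oa \<union> Ra \<Longrightarrow> orbit ?G w = orbit (loop_step ws0) w"
    using Pad0.orbit_split_disjoint(1)[OF in_S0(1) y1o y1(2)[symmetric] x2X y2o d] orbit_z1 ox2 by simp
  have SS2: "\<And>w. w \<in> Oa \<Longrightarrow> orbit ?G w = orbit ?H z1 \<or> orbit ?G w = orbit ?H y1"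
    using Pad0.orbit_split_disjoint(2)[OF in_S0(1) y1o y1(2)[symmetric] x2X y2o d] orbit_z1 by simp
  have oG: "\<And>w. w \<in> S0 \<Longrightarrow> orbit (loop_step ws1) w = orbit ?G w" using orbit_new sg by simp
  let ?w = "(u, N0, Up)"
  have w: "?w \<in> S0" using top_state_in_states u .
  show ?thesis
  proof (cases "?w \<in> Oa \<union> Ra")
    case False
    then have "new_cycle u = old_cycle u" using SS1[OF w False] oG[OF w] by simp
    then show ?thesis using nsub by simp
  next
    case True
    obtain w0 where w0: "w0 \<in> Oa" "new_cycle u = base_vertices n N0 (orbit (loop_step ws1) w0)"
    proof (cases "?w \<in> Oa")
      case True then show ?thesis using that by blast
    next
      case False
      then have "?w \<in> rev_state ` Oa" using \<open>?w \<in> Oa \<union> Ra\<close> Ra_eq by simp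
      then obtain w0 where w0: "w0 \<in> Oa" "?w = rev_state w0" by blast
      have "w0 \<in> S0" using w0(1) Pad0.orbit_subset in_S0(5) by blast
      then have "new_cycle u = base_vertices n N0 (orbit (loop_step ws1) w0)" using new_base_vertices_rev w0(2) by simp
      then show ?thesis using that w0(1) by blast
    qed
    have "w0 \<in> S0" using w0(1) Pad0.orbit_subset in_S0(5) by blast
    then have "orbit (loop_step ws1) w0 = orbit ?G w0" by (rule oG)
    then show ?thesis using SS2[OF w0(1)] w0(2) by auto
  qed
qed

lemma card_base_vertices_Oa_diff:
  assumes "A \<subseteq> Oa"
  shows "card (base_vertices n N0 (Oa - A)) = loop_length a - card (base_vertices n N0 A)"
proof -
  have "base_vertices n N0 (Oa - A) = base_vertices n N0 Oa - base_vertices n N0 A" by (rule base_vertices_orbit_diff[OF in_S0(5) assms])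
  moreover have "base_vertices n N0 A \<subseteq> base_vertices n N0 Oa" using assms by (rule base_vertices_mono)
  ultimately show ?thesis unfolding loop_length_def using card_Diff_subset[OF finite_base_vertices] by simp
qed

lemma card_new_cycle_Cross:
  assumes m: "m = Cross" and ob: "Ob = Oa" and u: "u \<in> V n" and nsub: "\<not> old_cycle u \<subseteq> new_cycle u"
  shows "card (new_cycle u) = position a b \<or> card (new_cycle u) = loop_length a - position a b"
proof -
  have z2: "z2 \<in> Oa" using orbit_z2 ob orbit_self[of z2 "loop_step ws0"] by simp
  have z3: "z3 \<in> Ra" using orbit_self[of z3 "loop_step ws0"] .
  have z4: "z4 \<in> Ra" using Rb_eq_Ra[OF ob] orbit_self[of z4 "loop_step ws0"] by simp
  have SC: "new_cycle u = base_vertices n N0 (orbit (loop_step ws0 \<circ> transpose z1 z2) z1)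
      \<or> new_cycle u = base_vertices n N0 (orbit (loop_step ws0 \<circ> transpose z1 z2) z2)"
    by (rule new_cycle_split[OF loop_step_link_perm_Cross[OF m] z2 _ z3 z4 u nsub]) (use ab in simp)
  have bO: "b \<in> base_vertices n N0 Oa" using Ub_in_Oa_iff ob bV by (simp add: base_vertices_def)
  define t where "t = hit_time a b"
  have tp: "(loop_step ws0 ^^ t) Ua \<in> {Ub, Db}" "\<And>i. i < t \<Longrightarrow> (loop_step ws0 ^^ i) Ua \<notin> {Ub, Db}" "0 < t"
    using hit_time_spec[OF aV bO ab] unfolding t_def by auto
  have nDb: "Db \<notin> Oa" using pad_orbit_not_both_base[OF in_S0(5), of b] Ub_in_Oa_iff ob by auto
  have tU: "(loop_step ws0 ^^ t) Ua = Ub" using tp(1) nDb orbit_funpow[where f="loop_step ws0" and i=t and x=Ua] by auto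
  obtain t' where t': "t = Suc t'" using tp(3) by (cases t) auto
  have q: "(loop_step ws0 ^^ t') Ua = z2"
  proof (rule Pad0.inj[THEN inj_onD])
    show "loop_step ws0 ((loop_step ws0 ^^ t') Ua) = loop_step ws0 z2" using tU t' loop_step_pad_at(2) by simp
  qed (use Pad0.funpow_in in_S0 in auto)
  have d1: "(loop_step ws0 ^^ t) z1 = z2" using q t' funpow_z1 by simp
  have d2: "\<forall>j<t. (loop_step ws0 ^^ j) z1 \<noteq> z2"
  proof (intro allI impI)
    fix j assume j: "j < t"
    show "(loop_step ws0 ^^ j) z1 \<noteq> z2"
    proof (cases j)
      case 0 then show ?thesis using ab by simp
    next
      case (Suc j')
      show ?thesis
      proof
        assume "(loop_step ws0 ^^ j) z1 = z2"
        then have "(loop_step ws0 ^^ j') Ua = z2" using Suc funpow_z1 by simp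
        then have "(loop_step ws0 ^^ Suc j') Ua = Ub" using loop_step_pad_at(2) by simp
        then show False using tp(2)[of "Suc j'"] j Suc by simp
      qed
    qed
  qed
  have z12: "z1 \<noteq> z2" using ab by simp
  have A2: "orbit (loop_step ws0 \<circ> transpose z1 z2) z2 = (\<lambda>i. (loop_step ws0 ^^ i) Ua) ` {..<t}"
    using Pad0.orbit_transpose_arc[OF in_S0(1) z12 d1 d2] funpow_z1_image by simp
  have A1: "orbit (loop_step ws0 \<circ> transpose z1 z2) z1 = Oa - orbit (loop_step ws0 \<circ> transpose z1 z2) z2"
    using Pad0.orbit_transpose_rest[OF in_S0(1) z12 d1 d2] orbit_z1 by simp
  have c2: "card (base_vertices n N0 (orbit (loop_step ws0 \<circ> transpose z1 z2) z2)) = position a b"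
    unfolding A2 position_def t_def ..
  have sub: "orbit (loop_step ws0 \<circ> transpose z1 z2) z2 \<subseteq> Oa" unfolding A2 by (auto simp: orbit_def)
  have c1: "card (base_vertices n N0 (orbit (loop_step ws0 \<circ> transpose z1 z2) z1)) = loop_length a - position a b"
    unfolding A1 using card_base_vertices_Oa_diff[OF sub] c2 by simp
  show ?thesis using SC c1 c2 by auto
qed

lemma card_new_cycle_Bar:
  assumes m: "m = Bar" and rb: "Rb = Oa" and u: "u \<in> V n" and nsub: "\<not> old_cycle u \<subseteq> new_cycle u"
  shows "card (new_cycle u) = position a b + 1 \<or> card (new_cycle u) = loop_length a - (position a b + 1)"
proof -
  have z4: "z4 \<in> Oa" using rb orbit_self[of z4 "loop_step ws0"] by simp
  have z3: "z3 \<in> Ra" using orbit_self[of z3 "loop_step ws0"] .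
  have z2: "z2 \<in> Ra" using Ob_eq_Ra[OF rb] orbit_z2 orbit_self[of z2 "loop_step ws0"] by simp
  have SC: "new_cycle u = base_vertices n N0 (orbit (loop_step ws0 \<circ> transpose z1 z4) z1)
      \<or> new_cycle u = base_vertices n N0 (orbit (loop_step ws0 \<circ> transpose z1 z4) z4)"
    by (rule new_cycle_split[OF loop_step_link_perm_Bar[OF m] z4 _ z2 z3 u nsub]) simp
  have bO: "b \<in> base_vertices n N0 Oa" using Db_in_Oa_iff rb bV by (simp add: base_vertices_def)
  define t where "t = hit_time a b"
  have tp: "(loop_step ws0 ^^ t) Ua \<in> {Ub, Db}" "\<And>i. i < t \<Longrightarrow> (loop_step ws0 ^^ i) Ua \<notin> {Ub, Db}" "0 < t"
    using hit_time_spec[OF aV bO ab] unfolding t_def by auto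
  have nUb: "Ub \<notin> Oa" using pad_orbit_not_both_base[OF in_S0(5), of b] Db_in_Oa_iff rb by auto
  have tD: "(loop_step ws0 ^^ t) Ua = Db" using tp(1) nUb orbit_funpow[where f="loop_step ws0" and i=t and x=Ua] by auto
  have d1: "(loop_step ws0 ^^ Suc (Suc t)) z1 = z4" using funpow_z1[of "Suc t"] tD loop_step_pad_at(5) by simp
  have d2: "\<forall>j<Suc (Suc t). (loop_step ws0 ^^ j) z1 \<noteq> z4"
  proof (intro allI impI)
    fix j assume j: "j < Suc (Suc t)"
    show "(loop_step ws0 ^^ j) z1 \<noteq> z4"
    proof (cases j)
      case 0 then show ?thesis by simp
    next
      case (Suc j')
      show ?thesis
      proof (cases j')
        case 0 then show ?thesis using Suc funpow_z1[of 0] by simp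
      next
        case (Suc j'')
        show ?thesis
        proof
          assume "(loop_step ws0 ^^ j) z1 = z4"
          then have e: "loop_step ws0 ((loop_step ws0 ^^ j'') Ua) = loop_step ws0 Db"
            using \<open>j = Suc j'\<close> Suc funpow_z1[of j'] loop_step_pad_at(5) by simp
          have "(loop_step ws0 ^^ j'') Ua = Db"
            by (rule Pad0.inj[THEN inj_onD, OF e]) (use Pad0.funpow_in in_S0 in auto)
          then show False using tp(2)[of j''] j \<open>j = Suc j'\<close> Suc by simp
        qed
      qed
    qed
  qed
  have z14: "z1 \<noteq> z4" by simp
  have A2: "orbit (loop_step ws0 \<circ> transpose z1 z4) z4 = (\<lambda>i. (loop_step ws0 ^^ i) Ua) ` {..<Suc (Suc t)}"
    using Pad0.orbit_transpose_arc[OF in_S0(1) z14 d1 d2] funpow_z1_image by simp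
  also have "\<dots> = (\<lambda>i. (loop_step ws0 ^^ i) Ua) ` {..<t} \<union> {Db, z4}"
    using tD loop_step_pad_at(5) by (auto simp: lessThan_Suc)
  finally have A2': "orbit (loop_step ws0 \<circ> transpose z1 z4) z4 = (\<lambda>i. (loop_step ws0 ^^ i) Ua) ` {..<t} \<union> {Db, z4}" .
  have A1: "orbit (loop_step ws0 \<circ> transpose z1 z4) z1 = Oa - orbit (loop_step ws0 \<circ> transpose z1 z4) z4"
    using Pad0.orbit_transpose_rest[OF in_S0(1) z14 d1 d2] orbit_z1 by simp
  have Vb: "base_vertices n N0 {Db, z4} = {b}" using bV by (auto simp: base_vertices_def)
  have bn: "b \<notin> base_vertices n N0 ((\<lambda>i. (loop_step ws0 ^^ i) Ua) ` {..<t})"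
    using position_bounds(3)[OF aV bO ab] unfolding t_def .
  have c2: "card (base_vertices n N0 (orbit (loop_step ws0 \<circ> transpose z1 z4) z4)) = position a b + 1"
    unfolding A2' base_vertices_Un Vb using bn finite_base_vertices unfolding position_def t_def by simp
  have sub: "orbit (loop_step ws0 \<circ> transpose z1 z4) z4 \<subseteq> Oa"
    unfolding A2' using z4 Db_in_Oa_iff rb by (auto simp: orbit_def)
  have c1: "card (base_vertices n N0 (orbit (loop_step ws0 \<circ> transpose z1 z4) z1)) = loop_length a - (position a b + 1)"
    unfolding A1 using card_base_vertices_Oa_diff[OF sub] c2 by simp
  show ?thesis using SC c1 c2 by auto
qed

lemma cycles_old: "cycles n ws = {old_cycle u | u. u \<in> V n}"
  using cycles_pad Pad.cycles_orbit by simp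

lemma cycles_new: "cycles n ws1 = {new_cycle u | u. u \<in> V n}"
  using New.cycles_orbit by simp

lemma splits_small_new_cycle:
  assumes "splits_small n ws ({a,b},m) k"
  shows "\<exists>u\<in>V n. new_cycle u \<subset> old_cycle u \<and> card (new_cycle u) \<le> k"
proof -
  obtain CC C1 C2 where C: "CC \<in> cycles n ws" "C1 \<union> C2 = CC" "C1 \<inter> C2 = {}" "C1 \<noteq> {}" "C2 \<noteq> {}"
    "cycles n ws1 = (cycles n ws - {CC}) \<union> {C1, C2}" "card C1 \<le> k \<or> card C2 \<le> k"
    using assms unfolding splits_small_def by blast
  obtain T where T: "T \<in> cycles n ws1" "T \<subset> CC" "card T \<le> k"
  proof (cases "card C1 \<le> k")
    case True
    have "C1 \<subset> CC" using C by blast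
    then show ?thesis using that C True by blast
  next
    case False
    have "C2 \<subset> CC" using C by blast
    then show ?thesis using that C False by blast
  qed
  obtain u where u: "u \<in> V n" "T = new_cycle u" using T(1) cycles_new by auto
  obtain u' where u': "u' \<in> V n" "CC = old_cycle u'" using C(1) cycles_old by auto
  have "u \<in> new_cycle u" using New.cycle_self[OF u(1)] by simp
  then have "u \<in> old_cycle u'" using T(2) u u' by blast
  then have "old_cycle u = old_cycle u'" using Pad.cycle_eqI[OF u'(1), of u] by simp
  then have "new_cycle u \<subset> old_cycle u" using T(2) u(2) u'(2) by simp
  then show ?thesis using u T(3) by blast
qed

lemma splits_small_position:
  assumes "splits_small n ws ({a,b},m) k"
  shows "b \<in> base_vertices n N0 Oa \<and> position a b \<in> bad_positions m (loop_length a) k"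
proof -
  obtain u where u: "u \<in> V n" "new_cycle u \<subset> old_cycle u" "card (new_cycle u) \<le> k" using splits_small_new_cycle[OF assms] by blast
  have nsub: "\<not> old_cycle u \<subseteq> new_cycle u" using u(2) by blast
  have uS: "u \<in> new_cycle u" using New.cycle_self[OF u(1)] by simp
  have cS: "1 \<le> card (new_cycle u)" using uS finite_base_vertices by (metis One_nat_def Suc_leI card_gt_0_iff empty_iff)
  have main: "b \<in> base_vertices n N0 Oa \<and> (case m of Cross \<Rightarrow> (position a b \<le> k \<or> loop_length a - position a b \<le> k)
     | Bar \<Rightarrow> (position a b + 1 \<le> k \<or> (1 \<le> loop_length a - (position a b + 1) \<and> loop_length a - (position a b + 1) \<le> k)))"
  proof (cases "Ob = Oa")
    case True
    have bO: "b \<in> base_vertices n N0 Oa" using Ub_in_Oa_iff True bV by (simp add: base_vertices_def)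
    show ?thesis
    proof (cases m)
      case Cross
      then show ?thesis using card_new_cycle_Cross[OF Cross True u(1) nsub] u(3) bO by auto
    next
      case Bar
      have z4: "z4 \<in> Ra" using Rb_eq_Ra[OF True] orbit_self[of z4 "loop_step ws0"] by simp
      have z2: "z2 \<in> Oa \<union> Ra" using True orbit_z2 orbit_self[of z2 "loop_step ws0"] by simp
      have "old_cycle u \<subseteq> new_cycle u"
        by (rule old_cycle_subset_restructure[OF loop_step_link_perm_Bar[OF Bar] z1_in_Oa z4 z2 _ _ u(1)]) (use orbit_self[of z3 "loop_step ws0"] ab in auto)
      then show ?thesis using nsub by simp
    qed
  next
    case nob: False
    show ?thesis
    proof (cases "Rb = Oa")
      case True
      have bO: "b \<in> base_vertices n N0 Oa" using Db_in_Oa_iff True bV by (simp add: base_vertices_def)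
      show ?thesis
      proof (cases m)
        case Bar
        then show ?thesis using card_new_cycle_Bar[OF Bar True u(1) nsub] u(3) bO cS by auto
      next
        case Cross
        have z2: "z2 \<in> Ra" using Ob_eq_Ra[OF True] orbit_z2 orbit_self[of z2 "loop_step ws0"] by simp
        have z4: "z4 \<in> Oa \<union> Ra" using True orbit_self[of z4 "loop_step ws0"] by simp
        have "old_cycle u \<subseteq> new_cycle u"
          by (rule old_cycle_subset_restructure[OF loop_step_link_perm_Cross[OF Cross] z1_in_Oa z2 _ z4 _ u(1)]) (use orbit_self[of z3 "loop_step ws0"] ab in auto)
        then show ?thesis using nsub by simp
      qed
    next
      case False
      then show ?thesis using old_cycle_subset_merge[OF nob False u(1)] nsub by simp
    qed
  qed
  then have bO: "b \<in> base_vertices n N0 Oa" by simp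
  have bnd: "1 \<le> position a b" "position a b < loop_length a" using position_bounds[OF aV bO ab] by auto
  show ?thesis using main bnd unfolding bad_positions_def by (cases m) auto
qed

end

context link_history begin

lemma new_linkI: "a \<in> V n \<Longrightarrow> b \<in> V n \<Longrightarrow> a \<noteq> b \<Longrightarrow> new_link n ws a b"
  unfolding new_link_def new_link_axioms_def using link_history_axioms by simp

lemma card_bad_partners:
  assumes a: "a \<in> V n"
  shows "card {b \<in> V n. b \<noteq> a \<and> splits_small n ws ({a,b},m) k} \<le> 2 * k"
proof -
  let ?S = "{b \<in> V n. b \<noteq> a \<and> splits_small n ws ({a,b},m) k}"
  let ?O = "base_vertices n (Suc (length ws)) (orbit (loop_step ws0) (a, Suc (length ws), Up))"
  have sub: "?S \<subseteq> ?O - {a}" and img: "position a ` ?S \<subseteq> bad_positions m (loop_length a) k"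
  proof -
    have *: "b \<in> ?O \<and> position a b \<in> bad_positions m (loop_length a) k" if "b \<in> ?S" for b
      using new_link.splits_small_position[OF new_linkI[of a b], of m k] that a by auto
    show "?S \<subseteq> ?O - {a}" using * by auto
    show "position a ` ?S \<subseteq> bad_positions m (loop_length a) k" using * by auto
  qed
  have "inj_on (position a) ?S" using inj_on_position[OF a] sub inj_on_subset by blast
  then have "card ?S = card (position a ` ?S)" by (simp add: card_image)
  also have "\<dots> \<le> card (bad_positions m (loop_length a) k)"
  proof (rule card_mono[OF _ img])
    show "finite (bad_positions m (loop_length a) k)" unfolding bad_positions_def by (cases m) auto
  qed
  also have "\<dots> \<le> 2 * k" by (rule card_bad_positions)
  finally show ?thesis .
qed

lemma card_bad_edges: "card {e \<in> E n. splits_small n ws (e, m) k} \<le> k * n"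
proof -
  have "2 * card {e \<in> E n. splits_small n ws (e, m) k} \<le> 2 * k * n"
    by (rule card_edges_double_count) (erule card_bad_partners)
  then show ?thesis by simp
qed

end

lemma UNIV_mark: "(UNIV :: mark set) = {Cross, Bar}"
  using mark.exhaust by auto

instance mark :: finite
  by standard (simp add: UNIV_mark)

lemma set_link_pmf_subset: "E n \<noteq> {} \<Longrightarrow> set_pmf (link_pmf n nu) \<subseteq> E n \<times> UNIV"
  using finite_E by (auto simp: link_pmf_def)

lemma prob_link_pmf_le:
  assumes "E n \<noteq> {}" and card_le: "\<And>m. card {e \<in> E n. (e, m) \<in> A} \<le> c"
  shows "measure_pmf.prob (link_pmf n nu) A \<le> real c / real (card (E n))"
proof -
  let ?M = "map_pmf (\<lambda>b. if b then Cross else Bar) (bernoulli_pmf nu)"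
  let ?p = "link_pmf n nu"
  let ?q = "\<lambda>m. pmf ?M m / card (E n)"
  have fin: "finite (E n \<times> (UNIV :: mark set))" using finite_E by simp
  have "measure_pmf.prob ?p A = measure_pmf.prob ?p (A \<inter> (E n \<times> UNIV))"
    using set_link_pmf_subset[OF assms(1)] by (intro measure_eq_AE) (auto simp: AE_measure_pmf_iff)
  also have "\<dots> = (\<Sum>x\<in>A \<inter> (E n \<times> UNIV). pmf ?p x)"
    by (rule measure_measure_pmf_finite) (use fin in auto)
  also have "\<dots> = (\<Sum>x\<in>E n \<times> UNIV. if x \<in> A then pmf ?p x else 0)"
    by (subst Int_commute, rule sum.inter_restrict[OF fin])
  also have "\<dots> = (\<Sum>e\<in>E n. \<Sum>m\<in>UNIV. if (e, m) \<in> A then ?q m else 0)"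
    unfolding sum.cartesian_product
    by (rule sum.cong[OF refl]) (auto simp: link_pmf_def pmf_pair assms(1) finite_E)
  also have "\<dots> = (\<Sum>m\<in>UNIV. \<Sum>e\<in>E n. if (e, m) \<in> A then ?q m else 0)"
    by (rule sum.swap)
  also have "\<dots> = (\<Sum>m\<in>UNIV. real (card {e \<in> E n. (e, m) \<in> A}) * ?q m)"
  proof (rule sum.cong[OF refl])
    fix m
    show "(\<Sum>e\<in>E n. if (e, m) \<in> A then ?q m else 0) = real (card {e \<in> E n. (e, m) \<in> A}) * ?q m"
      using sum.inter_filter[OF finite_E[of n], of "\<lambda>_. ?q m" "\<lambda>e. (e, m) \<in> A"] by simp
  qed
  also have "\<dots> \<le> (\<Sum>m\<in>UNIV. real c * ?q m)"
    using card_le by (intro sum_mono mult_right_mono) simp_all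
  also have "\<dots> = real c / card (E n) * (\<Sum>m\<in>UNIV. pmf ?M m)"
    by (simp add: sum_distrib_left)
  also have "(\<Sum>m\<in>UNIV. pmf ?M m) = 1"
    by (rule sum_pmf_eq_1) simp_all
  finally show ?thesis by simp
qed

theorem lemma2p1:
  fixes n s k :: nat and nu :: real and ws :: "link list"
  assumes "n > 2" and "0 \<le> nu" and "nu < 1"
    and "length ws = s"
    and "set ws \<subseteq> set_pmf (link_pmf n nu)"
  shows "measure_pmf.prob (link_pmf n nu) {l. splits_small n ws l k}
           \<le> 2 * real k / (real n - 1)"
proof -
  have "{1, 2} \<in> E n" using assms(1) by (intro pair_in_E) (auto simp: V_def)
  then have "E n \<noteq> {}" by blast
  have "valid_links n ws" using assms(5) set_link_pmf_subset[OF \<open>E n \<noteq> {}\<close>] unfolding valid_links_def by fastforce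
  then interpret link_history n ws by (rule link_history.intro)
  have "measure_pmf.prob (link_pmf n nu) {l. splits_small n ws l k} \<le> real (k * n) / real (card (E n))"
    by (rule prob_link_pmf_le[OF \<open>E n \<noteq> {}\<close>]) (simp add: card_bad_edges)
  also have "\<dots> = 2 * real k / (real n - 1)"
    using assms(1) by (simp add: real_card_E field_simps)
  finally show ?thesis .
qed

end
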